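(* Assume the standing setting below. Let $I$ be a dually safe feasible set and let $P=\{x_1,\dots,x_{2n+1}\}$ be an augmenting path for $I$. Put $S:=\mathring{\mathsf{span}}_M(I)\cap E_1$. Then $I\triangle P$ is independent in both $M$ and $N$, is dually safe, and: (A) $\mathsf{span}_M(I\triangle P)=\mathsf{span}_M(I\cup\{x_{2n+1}\})$; (B) $\mathsf{span}_N(I\triangle P)\cap E_0=\mathsf{span}_N(I\cup\{x_1\})\cap E_0$; (C) $\mathsf{span}_{N^*}(S)=\mathsf{span}_{N^*}(S\triangle P^1)$ and $S\triangle P^1$ is independent in $N^*$.
   Context: Standing setting: $E$ countable, $M$ a finitary matroid on $E$, $N$ a matroid on $E$ that is a direct sum of a finitary and a cofinitary matroid. $E_0$ = union of the finitary components of $N$, $E_1:=E\setminus E_0$, $F^j:=F\cap E_j$. $\mathring{\mathsf{span}}_M(F):=\mathsf{span}_M(F)\setminus F$; $F$ is dually safe if $F^1\subseteq\mathsf{span}_{N^*}(\mathring{\mathsf{span}}_M(F))$. $M/X:=(M^*\upharpoonright(E\setminus X))^*$, $M.X:=M/(E\setminus X)$. $W$ is an $(M,N)$-wave if $M\upharpoonright W$ has a base independent in $N.W$; $\mathsf{cond}(M,N)$: every wave $W$ has an $M$-independent base of $N.W$; $I$ independent in $M$ and $N$ is feasible if $\mathsf{cond}(M/I,N/I)$. For an independent set $J$ of a matroid $K$ and $e\notin J$ with $J\cup\{e\}$ dependent, $C_K(e,J)$ is the unique circuit in $J\cup\{e\}$. For $J$ independent in $M$ and $N$, the digraph $D(J)$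 on $E$ has an arc $xy$ iff one of: (1) $x\notin J$, $J\cup\{x\}$ is $M$-dependent and $y\in C_M(x,J)\setminus\{x\}$; (2) $x\in J^0$, $y\notin J$, $J\cup\{y\}$ is $N$-dependent and $x\in C_N(y,J)$; (3) $x\in J^1$, $T:=\mathring{\mathsf{span}}_M(J)^1$ is $N^*$-independent, $T\cup\{x\}$ is $N^*$-dependent and $y\in C_{N^*}(x,T)\setminus\{x\}$. An augmenting path for $J$ is a set $P=\{x_1,\dots,x_{2n+1}\}$ of distinct elements ($n\ge0$) with $x_1\in E_0\setminus\mathsf{span}_N(J)$, $x_{2n+1}\in E_0\setminus\mathsf{span}_M(J)$, $x_kx_{k+1}\in D(J)$ for $1\le k\le 2n$, and $x_kx_\ell\notin D(J)$ whenever $k+1<\ell$. *)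

theory Defs
  imports Main "HOL-Library.Countable_Set"
begin

text \<open>Matroids (possibly infinite) on a ground set E, given by an independence predicate.
  Axioms (I1)-(I3) and (IM) of Bruhn, Diestel, Kriesell, Pendavingh, Wollan.\<close>

definition base :: "'a set \<Rightarrow> ('a set \<Rightarrow> bool) \<Rightarrow> 'a set \<Rightarrow> bool" where
  "base E ind B \<longleftrightarrow> ind B \<and> B \<subseteq> E \<and> (\<forall>K. ind K \<and> K \<subseteq> E \<and> B \<subseteq> K \<longrightarrow> K = B)"

definition matroid :: "'a set \<Rightarrow> ('a set \<Rightarrow> bool) \<Rightarrow> bool" where
  "matroid E ind \<longleftrightarrow>
     (\<forall>I. ind I \<longrightarrow> I \<subseteq> E) \<and>
     ind {} \<and>
     (\<forall>I J. ind J \<and> I \<subseteq> J \<longrightarrow> ind I) \<and>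
     (\<forall>I B. ind I \<and> \<not> base E ind I \<and> base E ind B \<longrightarrow> (\<exists>x \<in> B - I. ind (insert x I))) \<and>
     (\<forall>I X. ind I \<and> I \<subseteq> X \<and> X \<subseteq> E \<longrightarrow>
        (\<exists>J. I \<subseteq> J \<and> J \<subseteq> X \<and> ind J \<and> (\<forall>K. ind K \<and> J \<subseteq> K \<and> K \<subseteq> X \<longrightarrow> K = J)))"

definition restr :: "'a set \<Rightarrow> ('a set \<Rightarrow> bool) \<Rightarrow> ('a set \<Rightarrow> bool)" where
  "restr X ind = (\<lambda>I. ind I \<and> I \<subseteq> X)"

definition dual :: "'a set \<Rightarrow> ('a set \<Rightarrow> bool) \<Rightarrow> ('a set \<Rightarrow> bool)" where
  "dual E ind = (\<lambda>X. X \<subseteq> E \<and> (\<exists>B. base E ind B \<and> X \<inter> B = {}))"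

definition contract :: "'a set \<Rightarrow> ('a set \<Rightarrow> bool) \<Rightarrow> 'a set \<Rightarrow> ('a set \<Rightarrow> bool)" where
  "contract E ind X = dual (E - X) (restr (E - X) (dual E ind))"

definition contract_to :: "'a set \<Rightarrow> ('a set \<Rightarrow> bool) \<Rightarrow> 'a set \<Rightarrow> ('a set \<Rightarrow> bool)" where
  "contract_to E ind X = contract E ind (E - X)"

definition circuit :: "'a set \<Rightarrow> ('a set \<Rightarrow> bool) \<Rightarrow> 'a set \<Rightarrow> bool" where
  "circuit E ind C \<longleftrightarrow> C \<subseteq> E \<and> \<not> ind C \<and> (\<forall>D. D \<subset> C \<longrightarrow> ind D)"

definition span :: "'a set \<Rightarrow> ('a set \<Rightarrow> bool) \<Rightarrow> 'a set \<Rightarrow> 'a set" where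
  "span E ind F = F \<union> {e \<in> E. \<exists>C. circuit E ind C \<and> e \<in> C \<and> C \<subseteq> insert e F}"

definition spanring :: "'a set \<Rightarrow> ('a set \<Rightarrow> bool) \<Rightarrow> 'a set \<Rightarrow> 'a set" where
  "spanring E ind F = span E ind F - F"

definition fcirc :: "'a set \<Rightarrow> ('a set \<Rightarrow> bool) \<Rightarrow> 'a \<Rightarrow> 'a set \<Rightarrow> 'a set" where
  "fcirc E ind e J = (THE C. circuit E ind C \<and> C \<subseteq> insert e J)"

definition finitary :: "'a set \<Rightarrow> ('a set \<Rightarrow> bool) \<Rightarrow> bool" where
  "finitary E ind \<longleftrightarrow> (\<forall>X. X \<subseteq> E \<and> (\<forall>F. F \<subseteq> X \<and> finite F \<longrightarrow> ind F) \<longrightarrow> ind X)"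

definition cofinitary :: "'a set \<Rightarrow> ('a set \<Rightarrow> bool) \<Rightarrow> bool" where
  "cofinitary E ind \<longleftrightarrow> finitary E (dual E ind)"

definition fin_cofin_sum :: "'a set \<Rightarrow> ('a set \<Rightarrow> bool) \<Rightarrow> bool" where
  "fin_cofin_sum E ind \<longleftrightarrow> (\<exists>A B. A \<inter> B = {} \<and> A \<union> B = E \<and>
      (\<forall>X. ind X \<longleftrightarrow> X \<subseteq> E \<and> ind (X \<inter> A) \<and> ind (X \<inter> B)) \<and>
      matroid A (restr A ind) \<and> matroid B (restr B ind) \<and>
      finitary A (restr A ind) \<and> cofinitary B (restr B ind))"

definition component :: "'a set \<Rightarrow> ('a set \<Rightarrow> bool) \<Rightarrow> 'a \<Rightarrow> 'a set" where
  "component E ind x = {y \<in> E. y = x \<or> (\<exists>C. circuit E ind C \<and> x \<in> C \<and> y \<in> C)}"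

definition E0 :: "'a set \<Rightarrow> ('a set \<Rightarrow> bool) \<Rightarrow> 'a set" where
  "E0 E ind = \<Union>{component E ind x | x. x \<in> E \<and>
       finitary (component E ind x) (restr (component E ind x) ind)}"

definition E1 :: "'a set \<Rightarrow> ('a set \<Rightarrow> bool) \<Rightarrow> 'a set" where
  "E1 E ind = E - E0 E ind"

definition symdiff :: "'a set \<Rightarrow> 'a set \<Rightarrow> 'a set" where
  "symdiff A B = (A - B) \<union> (B - A)"

definition dually_safe :: "'a set \<Rightarrow> ('a set \<Rightarrow> bool) \<Rightarrow> ('a set \<Rightarrow> bool) \<Rightarrow> 'a set \<Rightarrow> bool" where
  "dually_safe E indM indN F \<longleftrightarrow>
     F \<inter> E1 E indN \<subseteq> span E (dual E indN) (spanring E indM F)"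

definition wave :: "'a set \<Rightarrow> ('a set \<Rightarrow> bool) \<Rightarrow> ('a set \<Rightarrow> bool) \<Rightarrow> 'a set \<Rightarrow> bool" where
  "wave E indM indN W \<longleftrightarrow> W \<subseteq> E \<and>
     (\<exists>B. base W (restr W indM) B \<and> contract_to E indN W B)"

definition cond :: "'a set \<Rightarrow> ('a set \<Rightarrow> bool) \<Rightarrow> ('a set \<Rightarrow> bool) \<Rightarrow> bool" where
  "cond E indM indN \<longleftrightarrow> (\<forall>W. wave E indM indN W \<longrightarrow>
     (\<exists>B. base W (contract_to E indN W) B \<and> indM B))"

definition feasible :: "'a set \<Rightarrow> ('a set \<Rightarrow> bool) \<Rightarrow> ('a set \<Rightarrow> bool) \<Rightarrow> 'a set \<Rightarrow> bool" where
  "feasible E indM indN I \<longleftrightarrow> indM I \<and> indN I \<and>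
     cond (E - I) (contract E indM I) (contract E indN I)"

definition arc :: "'a set \<Rightarrow> ('a set \<Rightarrow> bool) \<Rightarrow> ('a set \<Rightarrow> bool) \<Rightarrow> 'a set \<Rightarrow> 'a \<Rightarrow> 'a \<Rightarrow> bool" where
  "arc E indM indN J x y \<longleftrightarrow> x \<in> E \<and> y \<in> E \<and>
     ((x \<notin> J \<and> \<not> indM (insert x J) \<and> y \<in> fcirc E indM x J - {x}) \<or>
      (x \<in> J \<inter> E0 E indN \<and> y \<notin> J \<and> \<not> indN (insert y J) \<and> x \<in> fcirc E indN y J) \<or>
      (x \<in> J \<inter> E1 E indN \<and>
        (let T = spanring E indM J \<inter> E1 E indN in
          dual E indN T \<and> \<not> dual E indN (insert x T) \<and>
          y \<in> fcirc E (dual E indN) x T - {x})))"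

text \<open>Augmenting path, given as the list [x_1, ..., x_{2n+1}].\<close>
definition aug_path :: "'a set \<Rightarrow> ('a set \<Rightarrow> bool) \<Rightarrow> ('a set \<Rightarrow> bool) \<Rightarrow> 'a set \<Rightarrow> 'a list \<Rightarrow> bool" where
  "aug_path E indM indN J xs \<longleftrightarrow> (\<exists>n. length xs = 2 * n + 1) \<and> distinct xs \<and>
     hd xs \<in> E0 E indN - span E indN J \<and>
     last xs \<in> E0 E indN - span E indM J \<and>
     (\<forall>k. Suc k < length xs \<longrightarrow> arc E indM indN J (xs ! k) (xs ! Suc k)) \<and>
     (\<forall>k l. k + 1 < l \<and> l < length xs \<longrightarrow> \<not> arc E indM indN J (xs ! k) (xs ! l))"

end

theory Submission
  imports Defs
begin

text \<open>The augmenting path alternates between elements outside \<open>I\<close> (even positions) and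
  elements of \<open>I\<close> (odd positions), and each arc comes from a fundamental circuit: in \<open>M\<close> for an
  arc leaving an even element, in \<open>N\<close> for an arc leaving an odd element of \<open>E\<^sub>0\<close>, and in the
  dual \<open>N\<^sup>*\<close>, relative to \<open>S\<close>, for an arc leaving an odd element of \<open>E\<^sub>1\<close>. Because the path has
  no shortcuts, the circuits of each kind form a triangular system, so all exchanges of that kind
  can be made at once without changing the span. Applied to \<open>I\<close> plus the last path element in
  \<open>M\<close>, to \<open>I\<close> plus the first one in \<open>N\<close>, and to \<open>S\<close> in \<open>N\<^sup>*\<close>, this gives (A), (B) and (C).
  Feasibility makes \<open>span\<^sub>M(I) - I\<close> coindependent in \<open>N\<close> and dual safety puts the elements of \<open>I\<close>
  in \<open>E\<^sub>1\<close> into the \<open>N\<^sup>*\<close>-span of \<open>S\<close>. Hence the part of the new set in \<open>E\<^sub>1\<close> is spanned in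
  \<open>N\<^sup>*\<close> by the new coindependent set but disjoint from it, so it is \<open>N\<close>-independent; together
  with (B) and the separator \<open>E\<^sub>0\<close> this gives \<open>N\<close>-independence and dual safety.\<close>

definition max_indep :: "('a set \<Rightarrow> bool) \<Rightarrow> 'a set \<Rightarrow> 'a set \<Rightarrow> bool" where
  "max_indep ind X J \<longleftrightarrow> J \<subseteq> X \<and> ind J \<and> (\<forall>K. ind K \<and> J \<subseteq> K \<and> K \<subseteq> X \<longrightarrow> K = J)"

lemma base_restr_iff: "base X (restr X ind) B \<longleftrightarrow> max_indep ind X B"
  unfolding base_def max_indep_def restr_def by blast

lemma max_indepD:
  assumes "max_indep ind X J"
  shows "J \<subseteq> X" "ind J" "\<And>b. b \<in> X \<Longrightarrow> b \<notin> J \<Longrightarrow> \<not> ind (insert b J)"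
proof -
  show "J \<subseteq> X" "ind J" using assms unfolding max_indep_def by blast+
  fix b assume b: "b \<in> X" "b \<notin> J"
  show "\<not> ind (insert b J)"
  proof
    assume "ind (insert b J)"
    moreover have "insert b J \<subseteq> X" using b \<open>J \<subseteq> X\<close> by blast
    ultimately have "insert b J = J" using assms unfolding max_indep_def by blast
    then show False using b by blast
  qed
qed

section \<open>Matroids given by their independent sets\<close>

locale indep_matroid =
  fixes E :: "'a set" and ind :: "'a set \<Rightarrow> bool"
  assumes matroid: "matroid E ind"
begin

lemma indep_subset_ground: "ind I \<Longrightarrow> I \<subseteq> E"
  using matroid[unfolded matroid_def, THEN conjunct1] by blast

lemma indep_empty: "ind {}"
  using matroid[unfolded matroid_def, THEN conjunct2, THEN conjunct1] .

lemma indep_subset: "ind J \<Longrightarrow> I \<subseteq> J \<Longrightarrow> ind I"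
  using matroid[unfolded matroid_def, THEN conjunct2, THEN conjunct2, THEN conjunct1] by blast

lemma indep_augment: "ind I \<Longrightarrow> \<not> base E ind I \<Longrightarrow> base E ind B \<Longrightarrow> \<exists>x\<in>B-I. ind (insert x I)"
  using matroid[unfolded matroid_def, THEN conjunct2, THEN conjunct2, THEN conjunct2, THEN conjunct1]
  by blast

lemma indep_extend_maximal: "ind I \<Longrightarrow> I \<subseteq> X \<Longrightarrow> X \<subseteq> E \<Longrightarrow> \<exists>J. I \<subseteq> J \<and> max_indep ind X J"
  using matroid[unfolded matroid_def, THEN conjunct2, THEN conjunct2, THEN conjunct2, THEN conjunct2]
  unfolding max_indep_def by blast

lemma max_indepI:
  assumes "J \<subseteq> X" "ind J" "\<And>b. b \<in> X \<Longrightarrow> b \<notin> J \<Longrightarrow> \<not> ind (insert b J)"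
  shows "max_indep ind X J"
  unfolding max_indep_def
proof (intro conjI allI impI)
  fix K assume K: "ind K \<and> J \<subseteq> K \<and> K \<subseteq> X"
  show "K = J"
  proof (rule ccontr)
    assume "K \<noteq> J"
    then obtain b where b: "b \<in> K" "b \<notin> J" using K by blast
    then have "ind (insert b J)" using K indep_subset[of K "insert b J"] by blast
    then show False using assms(3) b K by blast
  qed
qed (use assms in blast)+

lemma base_iff_max_indep: "base E ind B \<longleftrightarrow> max_indep ind E B"
  unfolding base_def max_indep_def by blast

lemma baseD:
  assumes "base E ind B"
  shows "ind B" "B \<subseteq> E" "\<And>K. ind K \<Longrightarrow> K \<subseteq> E \<Longrightarrow> B \<subseteq> K \<Longrightarrow> K = B"
  using assms unfolding base_def by blast+

lemma base_not_psubset: "base E ind B \<Longrightarrow> ind K \<Longrightarrow> K \<subseteq> E \<Longrightarrow> B \<subset> K \<Longrightarrow> False"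
  using baseD(3) by blast

lemma base_extend:
  assumes "ind I"
  shows "\<exists>B. base E ind B \<and> I \<subseteq> B"
proof -
  obtain B where "I \<subseteq> B" "max_indep ind E B"
    using indep_extend_maximal[OF assms indep_subset_ground[OF assms] order_refl] by blast
  then show ?thesis using base_iff_max_indep by blast
qed

lemma exists_base: "\<exists>B. base E ind B"
  using base_extend indep_empty by blast

lemma max_indep_superset_of_base_is_base:
  assumes B: "base E ind B" "B \<subseteq> X" and K: "max_indep ind X K"
  shows "base E ind K"
proof (rule ccontr)
  assume "\<not> base E ind K"
  then obtain b where "b \<in> B - K" "ind (insert b K)"
    using indep_augment[OF max_indepD(2)[OF K] _ B(1)] by blast
  then show False using max_indepD(3)[OF K] B(2) by blast
qed

lemma base_single_swap:
  assumes "base E ind K" "base E ind B" "x \<in> K" "x \<notin> B" "K \<subseteq> insert x B"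
  shows "\<exists>y\<in>B. y \<notin> K \<and> K = insert x (B - {y})"
proof -
  have "\<not> base E ind (K - {x})"
    using base_not_psubset baseD(1,2)[OF assms(1)] assms(3) by blast
  moreover have "ind (K - {x})" using baseD(1)[OF assms(1)] indep_subset by blast
  ultimately obtain y where y: "y \<in> B - (K - {x})" "ind (insert y (K - {x}))"
    using indep_augment assms(2) by blast
  have yK: "y \<notin> K" "y \<noteq> x" using y assms(4) by blast+
  have "base E ind (insert y (K - {x}))"
  proof (rule ccontr)
    assume "\<not> base E ind (insert y (K - {x}))"
    then obtain w where w: "w \<in> K - insert y (K - {x})" "ind (insert w (insert y (K - {x})))"
      using indep_augment[OF y(2) _ assms(1)] by blast
    then have "w = x" by blast
    moreover have "insert x (insert y (K - {x})) = insert y K" using assms(3) by blast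
    ultimately have "ind (insert y K)" using w(2) by simp
    moreover have "insert y K \<subseteq> E" using y baseD(2)[OF assms(2)] baseD(2)[OF assms(1)] by blast
    ultimately show False using base_not_psubset[OF assms(1)] yK by blast
  qed
  moreover have "insert y (K - {x}) \<subseteq> B" using y assms(5) by blast
  ultimately have "B = insert y (K - {x})" using baseD(3) baseD(1,2)[OF assms(2)] by blast
  then show ?thesis using y yK assms(3) by blast
qed

lemma base_exchange:
  assumes "base E ind B" "y \<in> B" "x \<notin> B" "ind (insert x (B - {y}))"
  shows "base E ind (insert x (B - {y}))"
proof (rule ccontr)
  assume "\<not> base E ind (insert x (B - {y}))"
  then obtain w where w: "w \<in> B - insert x (B - {y})" "ind (insert w (insert x (B - {y})))"
    using indep_augment[OF assms(4) _ assms(1)] by blast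
  then have "w = y" by blast
  moreover have "insert y (insert x (B - {y})) = insert x B" using assms(2) by blast
  ultimately have "ind (insert x B)" using w(2) by simp
  then show False using base_not_psubset[OF assms(1)] indep_subset_ground assms(3) by blast
qed

lemma circuitD:
  assumes "circuit E ind C"
  shows "C \<subseteq> E" "\<not> ind C" "\<And>D. D \<subset> C \<Longrightarrow> ind D"
  using assms unfolding circuit_def by blast+

lemma circuit_delete_indep: "circuit E ind C \<Longrightarrow> c \<in> C \<Longrightarrow> ind (C - {c})"
  using circuitD(3) by blast

lemma base_insert_max_indep:
  assumes B: "base E ind B" "x \<notin> B" and K: "max_indep ind (insert x B) K" "x \<in> K"
  shows "\<exists>y\<in>B. K = insert x (B - {y})"
proof -
  have "base E ind K" using max_indep_superset_of_base_is_base[OF B(1) _ K(1)] by blast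
  from base_single_swap[OF this B(1) K(2) B(2) max_indepD(1)[OF K(1)]] show ?thesis by blast
qed

lemma base_insert_circuit:
  assumes B: "base E ind B" and x: "x \<in> E" "x \<notin> B"
  shows "circuit E ind (insert x {y \<in> B. ind (insert x (B - {y}))})"
proof -
  define C where "C = insert x {y \<in> B. ind (insert x (B - {y}))}"
  have proper: "ind D" if DC: "D \<subset> C" for D
  proof -
    obtain c where c: "c \<in> C" "c \<notin> D" using DC by blast
    show ?thesis
    proof (cases "c = x")
      case True
      then have "D \<subseteq> B" using DC c C_def by blast
      then show ?thesis using baseD(1)[OF B] indep_subset by blast
    next
      case False
      then have "ind (insert x (B - {c}))" using c C_def by auto
      moreover have "D \<subseteq> insert x (B - {c})" using DC c C_def by blast
      ultimately show ?thesis using indep_subset by blast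
    qed
  qed
  have xC: "x \<in> C" unfolding C_def by blast
  have "\<not> ind C"
  proof
    assume iC: "ind C"
    have xBE: "insert x B \<subseteq> E" using baseD(2)[OF B] x by blast
    have "C \<subseteq> insert x B" unfolding C_def by blast
    then obtain K where K: "C \<subseteq> K" "max_indep ind (insert x B) K"
      using indep_extend_maximal[OF iC _ xBE] by blast
    have "x \<in> K" using K(1) xC by blast
    then obtain y where y: "y \<in> B" "K = insert x (B - {y})"
      using base_insert_max_indep[OF B x(2) K(2)] by blast
    have "ind (insert x (B - {y}))" using max_indepD(2)[OF K(2)] y(2) by simp
    then have "y \<in> C" using y(1) unfolding C_def by blast
    then show False using K(1) y x(2) by blast
  qed
  moreover have "C \<subseteq> E" using C_def baseD(2)[OF B] x by blast
  ultimately have "circuit E ind C" unfolding circuit_def using proper by blast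
  then show ?thesis unfolding C_def .
qed

lemma base_insert_circuit_unique:
  assumes B: "base E ind B" and x: "x \<in> E" "x \<notin> B" and D: "circuit E ind D" "D \<subseteq> insert x B"
  shows "D = insert x {y \<in> B. ind (insert x (B - {y}))}"
proof -
  define C where "C = insert x {y \<in> B. ind (insert x (B - {y}))}"
  have xC: "x \<in> C" unfolding C_def by blast
  have xBE: "insert x B \<subseteq> E" using baseD(2)[OF B] x by blast
  note Dc = circuitD[OF D(1)]
  have xD: "x \<in> D"
  proof (rule ccontr)
    assume "x \<notin> D"
    then have "D \<subseteq> B" using D(2) by blast
    then show False using Dc baseD(1)[OF B] indep_subset by blast
  qed
  have "D \<subseteq> C"
  proof
    fix y assume yD: "y \<in> D"
    show "y \<in> C"
    proof (cases "y = x")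
      case False
      have iDy: "ind (D - {y})" using circuit_delete_indep[OF D(1) yD] .
      have "D - {y} \<subseteq> insert x B" using D(2) by blast
      then obtain K where K: "D - {y} \<subseteq> K" "max_indep ind (insert x B) K"
        using indep_extend_maximal[OF iDy _ xBE] by blast
      have "x \<in> K" using K(1) xD False by blast
      then obtain y' where y': "y' \<in> B" "K = insert x (B - {y'})"
        using base_insert_max_indep[OF B x(2) K(2)] by blast
      have "y' = y"
      proof (rule ccontr)
        assume "y' \<noteq> y"
        moreover have "y \<in> B" using yD D(2) False by blast
        ultimately have "y \<in> K" using y'(2) by blast
        then have "D \<subseteq> K" using K(1) by blast
        then show False using max_indepD(2)[OF K(2)] Dc(2) indep_subset by blast
      qed
      then have "ind (insert x (B - {y}))" using max_indepD(2)[OF K(2)] y'(2) by simp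
      then show ?thesis using y'(1) \<open>y' = y\<close> unfolding C_def by blast
    qed (use xC in simp)
  qed
  moreover have "\<not> D \<subset> C" using circuitD(3)[OF base_insert_circuit[OF B x], folded C_def] Dc(2) by blast
  ultimately have "D = C" by blast
  then show ?thesis unfolding C_def .
qed

lemma unique_circuit_insert:
  assumes J: "ind J" and x: "x \<in> E" "x \<notin> J" and dep: "\<not> ind (insert x J)"
  shows "\<exists>C. circuit E ind C \<and> C \<subseteq> insert x J \<and> x \<in> C \<and>
      (\<forall>D. circuit E ind D \<and> D \<subseteq> insert x J \<longrightarrow> D = C)"
proof -
  obtain B where B: "base E ind B" "J \<subseteq> B" using base_extend J by blast
  have xB: "x \<notin> B"
  proof
    assume "x \<in> B"
    then have "insert x J \<subseteq> B" using B(2) by blast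
    then show False using indep_subset[OF baseD(1)[OF B(1)]] dep by blast
  qed
  define C where "C = insert x {y \<in> B. ind (insert x (B - {y}))}"
  have "C \<subseteq> insert x J"
  proof
    fix y assume yC: "y \<in> C"
    show "y \<in> insert x J"
    proof (rule ccontr)
      assume ny: "y \<notin> insert x J"
      then have "ind (insert x (B - {y}))" using yC C_def by auto
      moreover have "insert x J \<subseteq> insert x (B - {y})" using B(2) ny by blast
      ultimately show False using dep indep_subset by blast
    qed
  qed
  moreover have "circuit E ind C" unfolding C_def using base_insert_circuit[OF B(1) x(1) xB] .
  moreover have "x \<in> C" unfolding C_def by blast
  moreover have "D = C" if "circuit E ind D" "D \<subseteq> insert x J" for D
  proof -
    have "D \<subseteq> insert x B" using that(2) B(2) by blast
    from base_insert_circuit_unique[OF B(1) x(1) xB that(1) this] show ?thesis unfolding C_def .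
  qed
  ultimately show ?thesis by blast
qed

lemma fundamental_circuit:
  assumes "ind J" "x \<in> E" "x \<notin> J" "\<not> ind (insert x J)"
  shows "circuit E ind (fcirc E ind x J)" "fcirc E ind x J \<subseteq> insert x J" "x \<in> fcirc E ind x J"
    "\<And>D. circuit E ind D \<Longrightarrow> D \<subseteq> insert x J \<Longrightarrow> D = fcirc E ind x J"
proof -
  obtain C where C: "circuit E ind C" "C \<subseteq> insert x J" "x \<in> C"
      "\<forall>D. circuit E ind D \<and> D \<subseteq> insert x J \<longrightarrow> D = C"
    using unique_circuit_insert[OF assms] by blast
  have eq: "fcirc E ind x J = C" unfolding fcirc_def
  proof (rule the_equality)
    show "circuit E ind C \<and> C \<subseteq> insert x J" using C by blast
    show "\<And>D. circuit E ind D \<and> D \<subseteq> insert x J \<Longrightarrow> D = C" using C(4) by blast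
  qed
  show "circuit E ind (fcirc E ind x J)" "fcirc E ind x J \<subseteq> insert x J" "x \<in> fcirc E ind x J"
    using C(1-3) eq by simp_all
  show "\<And>D. circuit E ind D \<Longrightarrow> D \<subseteq> insert x J \<Longrightarrow> D = fcirc E ind x J"
    unfolding eq using C(4) by blast
qed

lemma dependent_has_circuit:
  assumes "\<not> ind X" "X \<subseteq> E"
  shows "\<exists>C. circuit E ind C \<and> C \<subseteq> X"
proof -
  obtain J where J: "max_indep ind X J"
    using indep_extend_maximal[OF indep_empty _ assms(2)] by blast
  note Jd = max_indepD[OF J]
  have "J \<noteq> X" using Jd(2) assms(1) by blast
  then obtain x where x: "x \<in> X" "x \<notin> J" using Jd(1) by blast
  have "x \<in> E" using x assms(2) by blast
  note C = fundamental_circuit(1,2)[OF Jd(2) this x(2) Jd(3)[OF x]]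
  have "fcirc E ind x J \<subseteq> X" using C(2) x(1) Jd(1) by blast
  then show ?thesis using C(1) by blast
qed

subsection \<open>Spans and exchange\<close>

lemma fcirc_transfer:
  assumes "ind I" "ind J" "x \<in> E" "x \<notin> I" "x \<notin> J" "\<not> ind (insert x I)"
    and "fcirc E ind x I \<subseteq> insert x J"
  shows "\<not> ind (insert x J)" "fcirc E ind x J = fcirc E ind x I"
proof -
  note C = fundamental_circuit[OF assms(1,3,4,6)]
  show dep: "\<not> ind (insert x J)" using assms(7) indep_subset circuitD(2)[OF C(1)] by blast
  show "fcirc E ind x J = fcirc E ind x I"
    using fundamental_circuit(4)[OF assms(2,3,5) dep C(1) assms(7)] by simp
qed

lemma span_indep_iff:
  assumes "ind F"
  shows "e \<in> span E ind F \<longleftrightarrow> e \<in> F \<or> (e \<in> E \<and> \<not> ind (insert e F))"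
proof
  assume "e \<in> span E ind F"
  then have "e \<in> F \<or> (e \<in> E \<and> (\<exists>C. circuit E ind C \<and> e \<in> C \<and> C \<subseteq> insert e F))"
    unfolding span_def by blast
  then show "e \<in> F \<or> (e \<in> E \<and> \<not> ind (insert e F))"
    using circuitD(2) indep_subset by blast
next
  assume a: "e \<in> F \<or> (e \<in> E \<and> \<not> ind (insert e F))"
  show "e \<in> span E ind F"
  proof (cases "e \<in> F")
    case True then show ?thesis unfolding span_def by blast
  next
    case False
    then have "e \<in> E" "\<not> ind (insert e F)" using a by blast+
    then show ?thesis using fundamental_circuit(1,2,3)[OF assms _ False] unfolding span_def by blast
  qed
qed

lemma span_mono: "F \<subseteq> G \<Longrightarrow> span E ind F \<subseteq> span E ind G"
  unfolding span_def by blast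

lemma span_superset: "F \<subseteq> span E ind F" unfolding span_def by blast

lemma exchange_indep:
  assumes J: "ind J" and x: "x \<in> E" "x \<notin> J" and dep: "\<not> ind (insert x J)"
    and y: "y \<in> fcirc E ind x J" "y \<noteq> x"
  shows "ind (insert x (J - {y}))"
proof (rule ccontr)
  assume d: "\<not> ind (insert x (J - {y}))"
  have iJ: "ind (J - {y})" using indep_subset[OF J] by blast
  have xJ': "x \<notin> J - {y}" using x by blast
  have D: "circuit E ind (fcirc E ind x (J - {y}))" "fcirc E ind x (J - {y}) \<subseteq> insert x (J - {y})"
    using fundamental_circuit(1,2)[OF iJ x(1) xJ' d] by blast+
  have "fcirc E ind x (J - {y}) \<subseteq> insert x J" using D(2) by blast
  then have "fcirc E ind x (J - {y}) = fcirc E ind x J" using fundamental_circuit(4)[OF J x dep D(1)] by blast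
  then show False using D(2) y by blast
qed

lemma exchange_indep_insert:
  assumes J: "ind J" and x: "x \<in> E" "x \<notin> J" and dep: "\<not> ind (insert x J)"
    and y: "y \<in> fcirc E ind x J" "y \<noteq> x"
    and e: "e \<notin> insert x J" and ie: "ind (insert e J)"
  shows "ind (insert e (insert x (J - {y})))"
proof (rule ccontr)
  let ?J' = "insert x (J - {y})"
  let ?C = "fcirc E ind x J"
  assume d: "\<not> ind (insert e ?J')"
  have iJ': "ind ?J'" using exchange_indep[OF assms(1-6)] .
  have eE: "e \<in> E" using indep_subset_ground[OF ie] by blast
  have eJ': "e \<notin> ?J'" using e by blast
  note D = fundamental_circuit[OF iJ' eE eJ' d]
  note C = fundamental_circuit[OF J x dep]
  have xD: "x \<in> fcirc E ind e ?J'"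
  proof (rule ccontr)
    assume "x \<notin> fcirc E ind e ?J'"
    then have "fcirc E ind e ?J' \<subseteq> insert e J" using D(2) by blast
    then show False using indep_subset[OF ie] circuitD(2)[OF D(1)] by blast
  qed
  have eC: "e \<notin> ?C" using C(2) e by blast
  have neq: "fcirc E ind e ?J' \<noteq> ?C" using D(3) eC by blast
  let ?Z = "(?C \<union> fcirc E ind e ?J') - {x}"
  have Zsub: "?Z \<subseteq> insert e J" using C(2) D(2) by blast
  have iZ: "ind ?Z" using indep_subset[OF ie Zsub] .
  have xZ: "x \<notin> ?Z" by blast
  have depZ: "\<not> ind (insert x ?Z)"
  proof
    assume "ind (insert x ?Z)"
    moreover have "?C \<subseteq> insert x ?Z" by blast
    ultimately show False using indep_subset circuitD(2)[OF C(1)] by blast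
  qed
  have "?C \<subseteq> insert x ?Z" by blast
  then have c1: "?C = fcirc E ind x ?Z" using fundamental_circuit(4)[OF iZ x(1) xZ depZ C(1)] by blast
  have "fcirc E ind e ?J' \<subseteq> insert x ?Z" by blast
  then have c2: "fcirc E ind e ?J' = fcirc E ind x ?Z" using fundamental_circuit(4)[OF iZ x(1) xZ depZ D(1)] by blast
  show False using neq c1 c2 by simp
qed

lemma exchange_span:
  assumes J: "ind J" and x: "x \<in> E" "x \<notin> J" and dep: "\<not> ind (insert x J)"
    and y: "y \<in> fcirc E ind x J" "y \<noteq> x"
  shows "span E ind (insert x (J - {y})) = span E ind J"
proof -
  let ?J' = "insert x (J - {y})"
  let ?C = "fcirc E ind x J"
  note C = fundamental_circuit[OF J x dep]
  have iJ': "ind ?J'" using exchange_indep[OF assms] .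
  have yJ: "y \<in> J" using C(2) y by blast
  have yE: "y \<in> E" using indep_subset_ground[OF J] yJ by blast
  have yJ': "y \<notin> ?J'" using y by blast
  have eqJ: "insert y ?J' = insert x J" using yJ by blast
  have dep': "\<not> ind (insert y ?J')" using dep eqJ by simp
  have C': "?C = fcirc E ind y ?J'" using fundamental_circuit(4)[OF iJ' yE yJ' dep' C(1)] C(2) eqJ by simp
  have xC': "x \<in> fcirc E ind y ?J'" using C(3) C' by simp
  have backJ: "insert y (?J' - {x}) = J" using yJ x(2) by blast
  have "e \<in> span E ind ?J' \<longleftrightarrow> e \<in> span E ind J" for e
  proof (cases "e \<in> insert x J")
    case True
    then consider "e = x" | "e = y" | "e \<in> J" "e \<noteq> y" by blast
    then show ?thesis
    proof cases
      case 1 then show ?thesis using span_indep_iff[OF iJ'] span_indep_iff[OF J] x dep by blast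
    next
      case 2 then show ?thesis using span_indep_iff[OF iJ'] span_indep_iff[OF J] yJ yE dep' by blast
    next
      case 3 then show ?thesis using span_indep_iff[OF iJ'] span_indep_iff[OF J] by blast
    qed
  next
    case False
    have e': "e \<notin> insert y ?J'" using False eqJ by simp
    have "ind (insert e J) \<longleftrightarrow> ind (insert e ?J')"
    proof
      assume "ind (insert e J)"
      then show "ind (insert e ?J')" using exchange_indep_insert[OF assms False] by blast
    next
      assume a: "ind (insert e ?J')"
      have "ind (insert e (insert y (?J' - {x})))"
        using exchange_indep_insert[OF iJ' yE yJ' dep' xC' _ e' a] y(2) by blast
      then show "ind (insert e J)" using backJ by simp
    qed
    then show ?thesis using span_indep_iff[OF iJ'] span_indep_iff[OF J] False by blast
  qed
  then show ?thesis by blast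
qed

lemma max_indep_insert_transfer:
  assumes X: "X \<subseteq> E" and K: "max_indep ind X K" and K': "max_indep ind X K'"
    and e: "e \<notin> X" and ie: "ind (insert e K)"
  shows "ind (insert e K')"
proof (rule ccontr)
  assume d: "\<not> ind (insert e K')"
  obtain B where B: "base E ind B" "insert e K \<subseteq> B" using base_extend[OF ie] by blast
  note Bd = baseD[OF B(1)]
  have BX: "B \<inter> X = K"
  proof
    show "K \<subseteq> B \<inter> X" using B(2) max_indepD(1)[OF K] by blast
    show "B \<inter> X \<subseteq> K"
    proof
      fix b assume b: "b \<in> B \<inter> X"
      show "b \<in> K"
      proof (rule ccontr)
        assume "b \<notin> K"
        then have "\<not> ind (insert b K)" using max_indepD(3)[OF K] b by blast
        moreover have "insert b K \<subseteq> B" using b B(2) by blast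
        ultimately show False using indep_subset Bd(1) by blast
      qed
    qed
  qed
  define Q where "Q = B - X - {e}"
  have XQE: "X \<union> Q \<subseteq> E" using X Bd(2) Q_def by blast
  have K'XQ: "K' \<subseteq> X \<union> Q" using max_indepD(1)[OF K'] by blast
  obtain J where J: "K' \<subseteq> J" "max_indep ind (X \<union> Q) J" using indep_extend_maximal[OF max_indepD(2)[OF K'] K'XQ XQE] by blast
  note Jd = max_indepD[OF J(2)]
  have bJ: "base E ind J"
  proof (rule ccontr)
    assume "\<not> base E ind J"
    then obtain b where b: "b \<in> B - J" "ind (insert b J)" using indep_augment[OF Jd(2) _ B(1)] by blast
    show False
    proof (cases "b = e")
      case True
      then have "insert e K' \<subseteq> insert b J" using J(1) by blast
      then show False using d indep_subset b(2) by blast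
    next
      case False
      then have "b \<in> X \<union> Q" using b Q_def by blast
      then show False using Jd(3) b by blast
    qed
  qed
  have iBe: "ind (B - {e})" using Bd(1) indep_subset by blast
  have nbBe: "\<not> base E ind (B - {e})"
  proof
    assume "base E ind (B - {e})"
    moreover have "e \<in> B" using B(2) by blast
    ultimately have "B = B - {e}" using baseD(3) Bd(1,2) by blast
    then show False using \<open>e \<in> B\<close> by blast
  qed
  obtain b where b: "b \<in> J - (B - {e})" "ind (insert b (B - {e}))" using indep_augment[OF iBe nbBe bJ] by blast
  have QB: "Q \<subseteq> B - {e}" unfolding Q_def by blast
  have bX1: "b \<in> X" using b Jd(1) QB by blast
  have eK: "e \<notin> K" using e max_indepD(1)[OF K] by blast
  have bX2: "b \<notin> K" using b B(2) eK by blast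
  note bX = bX1 bX2
  have "insert b K \<subseteq> insert b (B - {e})" using B(2) e max_indepD(1)[OF K] by blast
  then have "ind (insert b K)" using b(2) indep_subset by blast
  then show False using max_indepD(3)[OF K bX] by blast
qed

lemma span_subset_ground: "span E ind F \<subseteq> E \<union> F" unfolding span_def by blast

lemma span_subset_span:
  assumes L: "ind L" and A: "A \<subseteq> span E ind L"
  shows "span E ind A \<subseteq> span E ind L"
proof
  fix e assume eA: "e \<in> span E ind A"
  show "e \<in> span E ind L"
  proof (cases "e \<in> A \<or> e \<in> L")
    case True then show ?thesis using A span_superset by blast
  next
    case False
    then obtain C where C: "circuit E ind C" "e \<in> C" "C \<subseteq> insert e A" "e \<in> E"
      using eA unfolding span_def by blast
    have LE: "L \<subseteq> E" using indep_subset_ground[OF L] .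
    have AE: "A \<subseteq> E" using A span_subset_ground LE by blast
    let ?X = "L \<union> A"
    have XE: "?X \<subseteq> E" using LE AE by blast
    have mL: "max_indep ind ?X L"
    proof (rule max_indepI)
      fix b assume b: "b \<in> ?X" "b \<notin> L"
      then have "b \<in> span E ind L" using A by blast
      then show "\<not> ind (insert b L)" using span_indep_iff[OF L] b by blast
    qed (use L in blast)+
    have iC: "ind (C - {e})" using circuit_delete_indep[OF C(1,2)] .
    have CX: "C - {e} \<subseteq> ?X" using C(3) by blast
    obtain K where K: "C - {e} \<subseteq> K" "max_indep ind ?X K" using indep_extend_maximal[OF iC CX XE] by blast
    have eX: "e \<notin> ?X" using False by blast
    have "\<not> ind (insert e K)"
    proof
      assume "ind (insert e K)"
      moreover have "C \<subseteq> insert e K" using K(1) by blast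
      ultimately show False using indep_subset circuitD(2)[OF C(1)] by blast
    qed
    then have "\<not> ind (insert e L)" using max_indep_insert_transfer[OF XE mL K(2) eX] by blast
    then show ?thesis using span_indep_iff[OF L] C(4) by blast
  qed
qed

lemma max_indep_augment:
  assumes X: "X \<subseteq> E" and I: "ind I" "I \<subseteq> X" and nm: "\<not> max_indep ind X I"
    and K: "max_indep ind X K"
  shows "\<exists>b\<in>K - I. ind (insert b I)"
proof (rule ccontr)
  assume no: "\<not> (\<exists>b\<in>K - I. ind (insert b I))"
  obtain z where z: "z \<in> X" "z \<notin> I" "ind (insert z I)"
  proof -
    have "\<not> (\<forall>b. b \<in> X \<longrightarrow> b \<notin> I \<longrightarrow> \<not> ind (insert b I))"
      using nm max_indepI[OF I(2) I(1)] by blast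
    then show ?thesis using that by blast
  qed
  have KI: "K \<subseteq> span E ind I"
  proof
    fix b assume b: "b \<in> K"
    show "b \<in> span E ind I"
    proof (cases "b \<in> I")
      case True then show ?thesis using span_superset by blast
    next
      case False
      then have "\<not> ind (insert b I)" using no b by blast
      moreover have "b \<in> E" using b max_indepD(1)[OF K] X by blast
      ultimately show ?thesis using span_indep_iff[OF I(1)] by blast
    qed
  qed
  have "z \<in> span E ind K"
  proof (cases "z \<in> K")
    case True then show ?thesis using span_superset by blast
  next
    case False
    then show ?thesis using max_indepD(3)[OF K z(1)] span_indep_iff[OF max_indepD(2)[OF K]] z(1) X by blast
  qed
  then have "z \<in> span E ind I" using span_subset_span[OF I(1) KI] by blast
  then show False using span_indep_iff[OF I(1)] z by blast
qed

lemma restr_matroid: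
  assumes X: "X \<subseteq> E"
  shows "matroid X (restr X ind)"
proof -
  have bb: "base X (restr X ind) B \<longleftrightarrow> max_indep ind X B" for B
    unfolding base_def max_indep_def restr_def by blast
  show ?thesis unfolding matroid_def
  proof (intro conjI allI impI)
    show "restr X ind {}" unfolding restr_def using indep_empty by blast
  next
    fix I assume "restr X ind I" then show "I \<subseteq> X" unfolding restr_def by blast
  next
    fix I J assume "restr X ind J \<and> I \<subseteq> J" then show "restr X ind I" unfolding restr_def using indep_subset by blast
  next
    fix I B assume a: "restr X ind I \<and> \<not> base X (restr X ind) I \<and> base X (restr X ind) B"
    then have "ind I" "I \<subseteq> X" "\<not> max_indep ind X I" "max_indep ind X B" unfolding bb unfolding restr_def by blast+
    then obtain b where "b \<in> B - I" "ind (insert b I)" using max_indep_augment[OF X] by blast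
    moreover have "insert b I \<subseteq> X" using \<open>b \<in> B - I\<close> \<open>I \<subseteq> X\<close> max_indepD(1)[OF \<open>max_indep ind X B\<close>] by blast
    ultimately show "\<exists>x\<in>B - I. restr X ind (insert x I)" unfolding restr_def by blast
  next
    fix I Y assume a: "restr X ind I \<and> I \<subseteq> Y \<and> Y \<subseteq> X"
    then have "ind I" "I \<subseteq> Y" "Y \<subseteq> E" unfolding restr_def using X by blast+
    then obtain J where J: "I \<subseteq> J" "max_indep ind Y J" using indep_extend_maximal by blast
    have J2: "J \<subseteq> Y" "ind J" "\<forall>K. ind K \<and> J \<subseteq> K \<and> K \<subseteq> Y \<longrightarrow> K = J"
      using J(2) unfolding max_indep_def by blast+
    have "restr X ind J" unfolding restr_def using J2(1,2) a by blast
    moreover have "\<forall>K. restr X ind K \<and> J \<subseteq> K \<and> K \<subseteq> Y \<longrightarrow> K = J"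
      unfolding restr_def using J2(3) by blast
    ultimately show "\<exists>J. I \<subseteq> J \<and> J \<subseteq> Y \<and> restr X ind J \<and>
      (\<forall>K. restr X ind K \<and> J \<subseteq> K \<and> K \<subseteq> Y \<longrightarrow> K = J)"
      using J(1) J2(1) by blast
  qed
qed

subsection \<open>Duality and restriction\<close>

lemma dualI: "X \<subseteq> E \<Longrightarrow> base E ind B \<Longrightarrow> X \<inter> B = {} \<Longrightarrow> dual E ind X"
  unfolding dual_def by blast

lemma dualD: "dual E ind X \<Longrightarrow> X \<subseteq> E \<and> (\<exists>B. base E ind B \<and> X \<inter> B = {})"
  unfolding dual_def by blast

lemma base_dual_compl:
  assumes "base E ind B"
  shows "base E (dual E ind) (E - B)"
proof -
  have d: "dual E ind (E - B)" using dualI[OF _ assms] by blast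
  have m: "K = E - B" if K: "dual E ind K" "K \<subseteq> E" "E - B \<subseteq> K" for K
  proof -
    obtain B' where B': "base E ind B'" "K \<inter> B' = {}" using dualD[OF K(1)] by blast
    have "B' \<subseteq> B" using B' K(3) baseD(2)[OF B'(1)] by blast
    then have "B = B'" using baseD(3)[OF B'(1) baseD(1,2)[OF assms]] by blast
    then show ?thesis using B' K by blast
  qed
  show ?thesis unfolding base_def using d m by blast
qed

lemma base_dual: "base E (dual E ind) D \<longleftrightarrow> (\<exists>B. base E ind B \<and> D = E - B)"
proof
  assume D: "base E (dual E ind) D"
  then have "dual E ind D" unfolding base_def by blast
  then obtain B where B: "base E ind B" "D \<inter> B = {}" "D \<subseteq> E" using dualD by blast
  have "D \<subseteq> E - B" using B by blast
  moreover have "dual E ind (E - B)" using dualI[OF _ B(1)] by blast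
  ultimately have "E - B = D" using D unfolding base_def by blast
  then show "\<exists>B. base E ind B \<and> D = E - B" using B(1) by blast
next
  assume "\<exists>B. base E ind B \<and> D = E - B"
  then show "base E (dual E ind) D" using base_dual_compl by blast
qed

lemma dual_dual: "dual E (dual E ind) X \<longleftrightarrow> ind X"
proof
  assume "dual E (dual E ind) X"
  then obtain D where D: "X \<subseteq> E" "base E (dual E ind) D" "X \<inter> D = {}" unfolding dual_def by blast
  then obtain B where B: "base E ind B" "D = E - B" using base_dual by blast
  then have "X \<subseteq> B" using D by blast
  then show "ind X" using baseD(1)[OF B(1)] indep_subset by blast
next
  assume X: "ind X"
  obtain B where B: "base E ind B" "X \<subseteq> B" using base_extend[OF X] by blast
  have "base E (dual E ind) (E - B)" using base_dual_compl[OF B(1)] .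
  moreover have "X \<inter> (E - B) = {}" using B(2) by blast
  ultimately show "dual E (dual E ind) X" unfolding dual_def using indep_subset_ground[OF X] by blast
qed

lemma dual_dual_eq: "dual E (dual E ind) = ind"
  using dual_dual by blast

lemma dual_augment:
  assumes I: "dual E ind I" and nb: "\<not> base E (dual E ind) I"
    and D: "base E (dual E ind) D"
  shows "\<exists>x\<in>D - I. dual E ind (insert x I)"
proof -
  obtain B1 where B1: "base E ind B1" "D = E - B1" using D base_dual by blast
  have IE: "I \<subseteq> E" using dualD[OF I] by blast
  have "\<not> (\<forall>K. dual E ind K \<and> K \<subseteq> E \<and> I \<subseteq> K \<longrightarrow> K = I)"
    using nb I IE unfolding base_def by blast
  then obtain K where K: "dual E ind K" "K \<subseteq> E" "I \<subseteq> K" "K \<noteq> I"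
    by blast
  obtain z where z: "z \<in> K" "z \<notin> I" using K(3,4) by blast
  obtain B2 where B2: "base E ind B2" "K \<inter> B2 = {}" using dualD[OF K(1)] by blast
  have zE: "z \<in> E" using z K(2) by blast
  have zB2: "z \<notin> B2" using z B2 by blast
  have IB2: "I \<inter> B2 = {}" using K(3) B2(2) by blast
  show ?thesis
  proof (cases "z \<in> B1")
    case False
    have s1: "insert z I \<subseteq> E" using IE zE by blast
    have s2: "insert z I \<inter> B2 = {}" using zB2 IB2 by auto
    have "dual E ind (insert z I)" using dualI[OF s1 B2(1) s2] .
    then show ?thesis using z zE False B1(2) by blast
  next
    case True
    note B2d = baseD[OF B2(1)]
    have dep: "\<not> ind (insert z B2)"
    proof
      assume "ind (insert z B2)"
      moreover have "B2 \<subset> insert z B2" using zB2 by blast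
      moreover have "insert z B2 \<subseteq> E" using zE B2d(2) by blast
      ultimately show False using base_not_psubset[OF B2(1)] by blast
    qed
    note C = fundamental_circuit[OF B2d(1) zE zB2 dep]
    have "\<not> fcirc E ind z B2 \<subseteq> B1"
      using C(1) circuitD(2) indep_subset baseD(1)[OF B1(1)] by blast
    then obtain r where r: "r \<in> fcirc E ind z B2" "r \<notin> B1" by blast
    have rz: "r \<noteq> z" using r True by blast
    have rB2: "r \<in> B2" using r rz C(2) by blast
    have i: "ind (insert z (B2 - {r}))" using exchange_indep[OF B2d(1) zE zB2 dep r(1) rz] .
    have b: "base E ind (insert z (B2 - {r}))" using base_exchange[OF B2(1) rB2 zB2 i] .
    have rE: "r \<in> E" using rB2 B2d(2) by blast
    have s2: "insert r I \<inter> insert z (B2 - {r}) = {}" using IB2 z rz by auto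
    have s1: "insert r I \<subseteq> E" using IE rE by blast
    have "dual E ind (insert r I)" using dualI[OF s1 b s2] .
    moreover have "r \<notin> I" using IB2 rB2 by auto
    moreover have "r \<in> D" using B1(2) rE r(2) by blast
    ultimately show ?thesis by blast
  qed
qed

lemma dual_extend_maximal:
  assumes I: "dual E ind I" and IX: "I \<subseteq> X" and X: "X \<subseteq> E"
  shows "\<exists>J. I \<subseteq> J \<and> J \<subseteq> X \<and> dual E ind J \<and> (\<forall>K. dual E ind K \<and> J \<subseteq> K \<and> K \<subseteq> X \<longrightarrow> K = J)"
proof -
  obtain B0 where B0: "base E ind B0" "I \<inter> B0 = {}" using dualD[OF I] by blast
  have IB0: "\<And>a. a \<in> I \<Longrightarrow> a \<notin> B0" using B0(2) by auto
  note B0d = baseD[OF B0(1)]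
  have i1: "ind (B0 - X)" using B0d(1) indep_subset by blast
  have s1: "B0 - X \<subseteq> E - X" using B0d(2) by blast
  have s2: "E - X \<subseteq> E" by blast
  obtain L where L: "B0 - X \<subseteq> L" "max_indep ind (E - X) L"
    using indep_extend_maximal[OF i1 s1 s2] by blast
  note Ld = max_indepD[OF L(2)]
  have LB0: "L \<subseteq> L \<union> B0" "L \<union> B0 \<subseteq> E" using Ld(1) B0d(2) by blast+
  obtain B where B: "L \<subseteq> B" "max_indep ind (L \<union> B0) B" using indep_extend_maximal[OF Ld(2) LB0] by blast
  note Bd = max_indepD[OF B(2)]
  have B0LB: "B0 \<subseteq> L \<union> B0" by blast
  have bB: "base E ind B"
    using max_indep_superset_of_base_is_base[OF B0(1) B0LB B(2)] .
  define J where "J = X - B"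
  have Jm: "a \<in> J \<longleftrightarrow> a \<in> X \<and> a \<notin> B" for a unfolding J_def by blast
  have IJ: "I \<subseteq> J"
  proof
    fix a assume a: "a \<in> I"
    have "a \<notin> B0" using IB0 a by blast
    moreover have "a \<notin> L" using a IX Ld(1) by blast
    ultimately have "a \<notin> B" using Bd(1) by blast
    then show "a \<in> J" using Jm a IX by blast
  qed
  have JX: "J \<subseteq> X" using Jm by blast
  have JB: "J \<inter> B = {}" using Jm by blast
  have dJ: "dual E ind J" using dualI[OF _ bB JB] JX X by blast
  have mx: "K = J" if K: "dual E ind K" "J \<subseteq> K" "K \<subseteq> X" for K
  proof (rule ccontr)
    assume "K \<noteq> J"
    then obtain z where z: "z \<in> K" "z \<notin> J" using K(2) by blast
    have zB: "z \<in> B" using z K(3) Jm by blast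
    obtain B' where B': "base E ind B'" "K \<inter> B' = {}" using dualD[OF K(1)] by blast
    have KB': "\<And>a. a \<in> B' \<Longrightarrow> a \<notin> K" using B'(2) by auto
    note B'd = baseD[OF B'(1)]
    define A where "A = L \<union> (B' \<inter> X)"
    have Am: "a \<in> A \<longleftrightarrow> a \<in> L \<or> (a \<in> B' \<and> a \<in> X)" for a unfolding A_def by blast
    have AB: "A \<subseteq> B - {z}"
    proof
      fix a assume a: "a \<in> A"
      show "a \<in> B - {z}"
      proof (cases "a \<in> L")
        case True
        then have "a \<in> B" using B(1) by blast
        moreover have "a \<noteq> z" using True Ld(1) z(1) K(3) by blast
        ultimately show ?thesis by blast
      next
        case False
        then have aB': "a \<in> B'" "a \<in> X" using a Am by blast+
        then have "a \<notin> K" using KB' by blast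
        then have "a \<notin> J" "a \<noteq> z" using K(2) z(1) by blast+
        then show ?thesis using aB' Jm by blast
      qed
    qed
    have iA: "ind A" using AB Bd(2) indep_subset by blast
    have bA: "base E ind A"
    proof (rule ccontr)
      assume "\<not> base E ind A"
      then obtain b where b: "b \<in> B' - A" "ind (insert b A)" using indep_augment[OF iA _ B'(1)] by blast
      have bE: "b \<in> E" using b B'd(2) by blast
      have bnX: "b \<notin> X" using b Am by blast
      have bL: "b \<notin> L" using b Am by blast
      have "insert b L \<subseteq> insert b A" using Am by blast
      then have "ind (insert b L)" using b(2) indep_subset by blast
      moreover have "b \<in> E - X" using bE bnX by blast
      ultimately show False using Ld(3) bL by blast
    qed
    have "B = A" using baseD(3)[OF bA baseD(1)[OF bB] baseD(2)[OF bB]] AB by blast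
    then show False using AB zB by blast
  qed
  show ?thesis using IJ dJ mx JX by blast
qed

lemma dual_matroid: "matroid E (dual E ind)"
  unfolding matroid_def
proof (intro conjI allI impI)
  show "dual E ind {}" using exists_base dualI by blast
next
  fix I assume "dual E ind I" then show "I \<subseteq> E" using dualD by blast
next
  fix I J assume a: "dual E ind J \<and> I \<subseteq> J"
  then obtain B where "base E ind B" "J \<inter> B = {}" "J \<subseteq> E" using dualD by blast
  then show "dual E ind I" using a dualI[of I B] by blast
next
  fix I B assume "dual E ind I \<and> \<not> base E (dual E ind) I \<and> base E (dual E ind) B"
  then show "\<exists>x\<in>B - I. dual E ind (insert x I)" using dual_augment by blast
next
  fix I X assume "dual E ind I \<and> I \<subseteq> X \<and> X \<subseteq> E"
  then show "\<exists>J. I \<subseteq> J \<and> J \<subseteq> X \<and> dual E ind J \<and> (\<forall>K. dual E ind K \<and> J \<subseteq> K \<and> K \<subseteq> X \<longrightarrow> K = J)"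
    using dual_extend_maximal by blast
qed

end

lemma indep_matroid_dual: "indep_matroid E ind \<Longrightarrow> indep_matroid E (dual E ind)"
  using indep_matroid.dual_matroid indep_matroid.intro by blast

lemma indep_matroid_restr: "indep_matroid E ind \<Longrightarrow> X \<subseteq> E \<Longrightarrow> indep_matroid X (restr X ind)"
  using indep_matroid.restr_matroid indep_matroid.intro by blast

subsection \<open>Connectivity and separators\<close>

definition circuit_related :: "'a set \<Rightarrow> ('a set \<Rightarrow> bool) \<Rightarrow> 'a \<Rightarrow> 'a \<Rightarrow> bool" where
  "circuit_related E ind x y \<longleftrightarrow> x = y \<or> (\<exists>C. circuit E ind C \<and> x \<in> C \<and> y \<in> C)"

definition separator :: "'a set \<Rightarrow> ('a set \<Rightarrow> bool) \<Rightarrow> 'a set \<Rightarrow> bool" where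
  "separator E ind Y \<longleftrightarrow> Y \<subseteq> E \<and> (\<forall>X. ind X \<longleftrightarrow> X \<subseteq> E \<and> ind (X \<inter> Y) \<and> ind (X - Y))"

context indep_matroid begin

lemma fcirc_exchange_link:
  assumes L: "ind L" and x: "x \<in> E" "x \<notin> L" "\<not> ind (insert x L)"
    and z: "z \<in> E" "z \<notin> L" "\<not> ind (insert z L)" "x \<noteq> z"
    and w: "w \<in> fcirc E ind z L" "w \<in> fcirc E ind x L" "w \<noteq> x"
  shows "\<exists>F. circuit E ind F \<and> x \<in> F \<and> z \<in> F"
proof -
  have wz: "w \<noteq> z" using w(2) fundamental_circuit(2)[OF L x] z(2) w(3) by blast
  let ?L' = "insert z (L - {w})"
  have iL': "ind ?L'" using exchange_indep[OF L z(1-3) w(1) wz] .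
  have xL': "x \<notin> ?L'" using x(2) z(4) by blast
  have "x \<in> span E ind L" using span_indep_iff[OF L] x(1,3) by blast
  then have "x \<in> span E ind ?L'" using exchange_span[OF L z(1-3) w(1) wz] by simp
  then have depx': "\<not> ind (insert x ?L')" using span_indep_iff[OF iL'] xL' by blast
  note F = fundamental_circuit[OF iL' x(1) xL' depx']
  have "z \<in> fcirc E ind x ?L'"
  proof (rule ccontr)
    assume "z \<notin> fcirc E ind x ?L'"
    then have "fcirc E ind x ?L' \<subseteq> insert x L" using F(2) by blast
    then have "fcirc E ind x ?L' = fcirc E ind x L" using fundamental_circuit(4)[OF L x F(1)] by simp
    then show False using w(2,3) wz F(2) by blast
  qed
  then show ?thesis using F(1,3) by blast
qed

lemma circuit_link:
  assumes C: "circuit E ind C" "x \<in> C" "y \<in> C" and D: "circuit E ind D" "y \<in> D" "z \<in> D"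
  shows "\<exists>F. circuit E ind F \<and> x \<in> F \<and> z \<in> F"
proof (cases "z \<in> C \<or> x \<in> D")
  case True then show ?thesis using C D by blast
next
  case False
  then have zC: "z \<notin> C" and xD: "x \<notin> D" by blast+
  note Cd = circuitD[OF C(1)] and Dd = circuitD[OF D(1)]
  have xE: "x \<in> E" and zE: "z \<in> E" using Cd(1) Dd(1) C(2) D(3) by blast+
  define X0 where "X0 = (C \<union> D) - {z}"
  have iCx: "ind (C - {x})" using circuit_delete_indep[OF C(1,2)] .
  have CxX0: "C - {x} \<subseteq> X0" and X0E: "X0 \<subseteq> E" using zC Cd(1) Dd(1) unfolding X0_def by blast+
  obtain L where L: "C - {x} \<subseteq> L" "max_indep ind X0 L"
    using indep_extend_maximal[OF iCx CxX0 X0E] by blast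
  note Ld = max_indepD[OF L(2)]
  have xL: "x \<notin> L" using L(1) Ld(2) indep_subset[of L C] Cd(2) by blast
  have CxL: "C \<subseteq> insert x L" using L(1) by blast
  have depx: "\<not> ind (insert x L)" using CxL indep_subset Cd(2) by blast
  have Cfc: "C = fcirc E ind x L" using fundamental_circuit(4)[OF Ld(2) xE xL depx C(1) CxL] .
  have "X0 \<subseteq> span E ind L"
  proof
    fix a assume a: "a \<in> X0"
    show "a \<in> span E ind L"
    proof (cases "a \<in> L")
      case False then show ?thesis using Ld(3)[OF a False] span_indep_iff[OF Ld(2)] a X0E by blast
    qed (use span_superset in blast)
  qed
  moreover have "z \<in> span E ind (D - {z})"
    using span_indep_iff[OF circuit_delete_indep[OF D(1,3)]] zE Dd(2) D(3) by (simp add: insert_absorb)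
  ultimately have "z \<in> span E ind L" using span_subset_span[OF Ld(2)] X0_def by blast
  moreover have zL: "z \<notin> L" using Ld(1) X0_def by blast
  ultimately have depz: "\<not> ind (insert z L)" using span_indep_iff[OF Ld(2)] by blast
  have xz: "x \<noteq> z" using zC C(2) by blast
  show ?thesis
  proof (cases "\<exists>w. w \<in> fcirc E ind z L \<and> w \<in> C \<and> w \<noteq> x")
    case True
    then show ?thesis using fcirc_exchange_link[OF Ld(2) xE xL depx zE zL depz xz] Cfc by blast
  next
    case False
    have "fcirc E ind z L \<subseteq> D"
    proof
      fix a assume a: "a \<in> fcirc E ind z L"
      show "a \<in> D"
      proof (cases "a = z")
        case False
        then have "a \<in> L" using a fundamental_circuit(2)[OF Ld(2) zE zL depz] by blast
        then have "a \<in> X0" "a \<noteq> x" using Ld(1) xL by blast+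
        moreover have "a \<notin> C" using \<open>\<not> (\<exists>w. w \<in> fcirc E ind z L \<and> w \<in> C \<and> w \<noteq> x)\<close> a \<open>a \<noteq> x\<close>
          by blast
        ultimately show ?thesis unfolding X0_def by blast
      qed (use D(3) in simp)
    qed
    moreover have "y \<notin> fcirc E ind z L" using False C(3) xD D(2) by blast
    ultimately have "fcirc E ind z L \<subset> D" using D(2) by blast
    then show ?thesis using Dd(3) circuitD(2)[OF fundamental_circuit(1)[OF Ld(2) zE zL depz]] by blast
  qed
qed

lemma circuit_related_trans: "circuit_related E ind x y \<Longrightarrow> circuit_related E ind y z \<Longrightarrow> circuit_related E ind x z"
  unfolding circuit_related_def using circuit_link by metis

lemma component_circuit_related: "component E ind x = {y \<in> E. circuit_related E ind x y}"
  unfolding component_def circuit_related_def by blast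

lemma circuit_subset_E0:
  assumes C: "circuit E ind C" and c: "c \<in> C" "c \<in> E0 E ind"
  shows "C \<subseteq> E0 E ind"
proof
  fix d assume d: "d \<in> C"
  obtain z where z: "z \<in> E" "finitary (component E ind z) (restr (component E ind z) ind)"
     "c \<in> component E ind z"
    using c(2) unfolding E0_def by blast
  have "circuit_related E ind z c" using z(3) component_circuit_related by blast
  moreover have "circuit_related E ind c d" using C c(1) d unfolding circuit_related_def by blast
  ultimately have "circuit_related E ind z d" using circuit_related_trans by blast
  moreover have "d \<in> E" using circuitD(1)[OF C] d by blast
  ultimately have "d \<in> component E ind z" using component_circuit_related by blast
  then show "d \<in> E0 E ind" using z(1,2) unfolding E0_def by blast
qed

lemma E0_subset: "E0 E ind \<subseteq> E"
proof
  fix a assume "a \<in> E0 E ind"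
  then obtain z where "a \<in> component E ind z" unfolding E0_def by blast
  then show "a \<in> E" unfolding component_def by blast
qed

lemma separatorI:
  assumes Y: "Y \<subseteq> E" and c: "\<And>C. circuit E ind C \<Longrightarrow> C \<subseteq> Y \<or> C \<inter> Y = {}"
  shows "separator E ind Y"
  unfolding separator_def
proof (intro conjI allI)
  show "Y \<subseteq> E" using Y .
  fix X
  show "ind X \<longleftrightarrow> X \<subseteq> E \<and> ind (X \<inter> Y) \<and> ind (X - Y)"
  proof
    assume iX: "ind X"
    have "ind (X \<inter> Y)" using indep_subset[OF iX] by blast
    moreover have "ind (X - Y)" using indep_subset[OF iX] by blast
    ultimately show "X \<subseteq> E \<and> ind (X \<inter> Y) \<and> ind (X - Y)" using indep_subset_ground[OF iX] by blast
  next
    assume a: "X \<subseteq> E \<and> ind (X \<inter> Y) \<and> ind (X - Y)"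
    show "ind X"
    proof (rule ccontr)
      assume "\<not> ind X"
      then obtain C where C: "circuit E ind C" "C \<subseteq> X" using dependent_has_circuit a by blast
      have "\<not> ind C" using circuitD(2)[OF C(1)] .
      moreover from c[OF C(1)] have "C \<subseteq> X \<inter> Y \<or> C \<subseteq> X - Y" using C(2) by blast
      ultimately show False using a indep_subset by blast
    qed
  qed
qed

lemma separator_E0: "separator E ind (E0 E ind)"
proof (rule separatorI[OF E0_subset])
  fix C assume C: "circuit E ind C"
  show "C \<subseteq> E0 E ind \<or> C \<inter> E0 E ind = {}"
  proof (cases "C \<inter> E0 E ind = {}")
    case False
    then obtain c where "c \<in> C" "c \<in> E0 E ind" by blast
    then show ?thesis using circuit_subset_E0[OF C] by blast
  qed simp
qed

lemma separatorD: "separator E ind Y \<Longrightarrow> ind X \<longleftrightarrow> X \<subseteq> E \<and> ind (X \<inter> Y) \<and> ind (X - Y)"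
  unfolding separator_def by blast

lemma separator_dual:
  assumes s: "separator E ind Y"
  shows "separator E (dual E ind) Y"
  unfolding separator_def
proof (intro conjI allI)
  show "Y \<subseteq> E" using s unfolding separator_def by blast
  fix X
  show "dual E ind X \<longleftrightarrow> X \<subseteq> E \<and> dual E ind (X \<inter> Y) \<and> dual E ind (X - Y)"
  proof
    assume "dual E ind X"
    then show "X \<subseteq> E \<and> dual E ind (X \<inter> Y) \<and> dual E ind (X - Y)"
      using indep_matroid.indep_subset[OF indep_matroid_dual[OF indep_matroid_axioms]] dualD by blast
  next
    assume a: "X \<subseteq> E \<and> dual E ind (X \<inter> Y) \<and> dual E ind (X - Y)"
    obtain B0 where B0: "base E ind B0" "(X \<inter> Y) \<inter> B0 = {}" using a dualD by blast
    obtain B1 where B1: "base E ind B1" "(X - Y) \<inter> B1 = {}" using a dualD by blast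
    define B where "B = (B0 \<inter> Y) \<union> (B1 - Y)"
    have BY: "B \<inter> Y = B0 \<inter> Y" "B - Y = B1 - Y" unfolding B_def by blast+
    have BE: "B \<subseteq> E" using baseD(2)[OF B0(1)] baseD(2)[OF B1(1)] B_def by blast
    have iB: "ind B" using separatorD[OF s, of B] BE BY baseD(1)[OF B0(1)] baseD(1)[OF B1(1)] indep_subset
      by (metis Diff_subset inf_le1)
    have bB: "base E ind B" unfolding base_def
    proof (intro conjI allI impI)
      fix K assume K: "ind K \<and> K \<subseteq> E \<and> B \<subseteq> K"
      show "K = B"
      proof (rule ccontr)
        assume "K \<noteq> B"
        then obtain e where e: "e \<in> K" "e \<notin> B" using K by blast
        show False
        proof (cases "e \<in> Y")
          case True
          have eB0: "e \<notin> B0" using e True BY by blast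
          have "insert e B0 \<inter> Y \<subseteq> K \<inter> Y" using K BY e True by blast
          then have i1: "ind (insert e B0 \<inter> Y)" using K indep_subset by (meson inf_le1 subset_trans)
          have i2: "ind (insert e B0 - Y)" using baseD(1)[OF B0(1)] indep_subset True by (metis Diff_subset insert_Diff_if)
          have "insert e B0 \<subseteq> E" using K e baseD(2)[OF B0(1)] by blast
          then have "ind (insert e B0)" using separatorD[OF s] i1 i2 by blast
          moreover have "B0 \<subset> insert e B0" using eB0 by blast
          moreover have "insert e B0 \<subseteq> E" using K e baseD(2)[OF B0(1)] by blast
          ultimately show False using base_not_psubset[OF B1(1)] base_not_psubset[OF B0(1)] by blast
        next
          case False
          have eB1: "e \<notin> B1" using e False BY by blast
          have "insert e B1 - Y \<subseteq> K - Y" using K BY e False by blast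
          then have i1: "ind (insert e B1 - Y)" using K indep_subset by (meson Diff_subset subset_trans)
          have i2: "ind (insert e B1 \<inter> Y)" using baseD(1)[OF B1(1)] indep_subset False by (metis inf_le1 insert_inter_insert inf.absorb_iff2 Int_insert_left)
          have "insert e B1 \<subseteq> E" using K e baseD(2)[OF B1(1)] by blast
          then have "ind (insert e B1)" using separatorD[OF s] i1 i2 by blast
          moreover have "B1 \<subset> insert e B1" using eB1 by blast
          moreover have "insert e B1 \<subseteq> E" using K e baseD(2)[OF B1(1)] by blast
          ultimately show False using base_not_psubset[OF B1(1)] by blast
        qed
      qed
    qed (use iB BE in blast)+
    have "X \<inter> B = {}" using B0(2) B1(2) B_def by blast
    then show "dual E ind X" using dualI[OF _ bB] a by blast
  qed
qed

lemma separator_insert_indep_iff: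
  assumes s: "separator E ind Y" and F: "ind F" and e: "e \<in> Y"
  shows "ind (insert e F) \<longleftrightarrow> ind (insert e (F \<inter> Y))"
proof -
  have YE: "Y \<subseteq> E" using s unfolding separator_def by blast
  have FE: "F \<subseteq> E" using indep_subset_ground[OF F] .
  have sub: "insert e F \<subseteq> E" using FE YE e by blast
  have eq1: "insert e F \<inter> Y = insert e (F \<inter> Y)" using e by blast
  have eq2: "insert e F - Y = F - Y" using e by blast
  have s1: "ind (insert e F) = (ind (insert e (F \<inter> Y)) \<and> ind (F - Y))"
    using separatorD[OF s, of "insert e F"] sub unfolding eq1 eq2 by simp
  have "ind (F - Y)" using indep_subset[OF F] by blast
  then show ?thesis using s1 by blast
qed

lemma separator_compl:
  assumes s: "separator E ind Y"
  shows "separator E ind (E - Y)"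
  unfolding separator_def
proof (intro conjI allI)
  show "E - Y \<subseteq> E" by blast
  fix X
  have "X \<subseteq> E \<Longrightarrow> X \<inter> (E - Y) = X - Y" "X \<subseteq> E \<Longrightarrow> X - (E - Y) = X \<inter> Y" by blast+
  then show "ind X \<longleftrightarrow> X \<subseteq> E \<and> ind (X \<inter> (E - Y)) \<and> ind (X - (E - Y))"
    using separatorD[OF s, of X] by auto
qed

lemma contract_indep_in_span:
  assumes I: "ind I" and K: "contract E ind I K" "K \<subseteq> span E ind I"
  shows "K = {}"
proof (rule ccontr)
  assume "K \<noteq> {}"
  then obtain k where kK: "k \<in> K" by blast
  obtain D where D: "max_indep (dual E ind) (E - I) D" "K \<inter> D = {}"
    using K(1) unfolding contract_def dual_def[of "E - I"] base_restr_iff by blast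
  have "K \<subseteq> E - I" using K(1) unfolding contract_def dual_def[of "E - I"] by blast
  then have k: "k \<in> E - I" "k \<notin> D" "k \<in> span E ind I" using kK K(2) D(2) by blast+
  note Dd = max_indepD[OF D(1)]
  obtain B0 where B0: "base E ind B0" "D \<inter> B0 = {}" using Dd(2) unfolding dual_def by blast
  have "ind (B0 - {k})" "B0 - {k} \<subseteq> E - D - {k}"
    using indep_subset baseD(1,2)[OF B0(1)] B0(2) by blast+
  then obtain J where J: "B0 - {k} \<subseteq> J" "max_indep ind (E - D - {k}) J"
    using indep_extend_maximal[of "B0 - {k}" "E - D - {k}"] by blast
  note Jd = max_indepD[OF J(2)]
  have "base E ind J"
  proof (rule ccontr)
    assume "\<not> base E ind J"
    then obtain b where b: "b \<in> B0 - J" "ind (insert b J)" using indep_augment[OF Jd(2) _ B0(1)] by blast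
    then have "b = k" using Jd(3) B0(2) baseD(2)[OF B0(1)] by blast
    have "I \<subseteq> E - D - {k}" using indep_subset_ground[OF I] Dd(1) k(1) by blast
    then have "I \<subseteq> span E ind J" using Jd(3) span_indep_iff[OF Jd(2)] span_superset by blast
    then have "k \<in> span E ind J" using span_subset_span[OF Jd(2)] k(3) by blast
    moreover have "k \<notin> J" using Jd(1) by blast
    ultimately show False using span_indep_iff[OF Jd(2)] b(2) \<open>b = k\<close> by blast
  qed
  moreover have "insert k D \<subseteq> E" "insert k D \<inter> J = {}" using k(1) Dd(1) Jd(1) by blast+
  ultimately have "dual E ind (insert k D)" using dualI by blast
  then show False using Dd(3)[OF k(1,2)] by blast
qed

text \<open>The condition on \<open>K'\<close> makes the fundamental circuits triangular: the pair indexed by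
  the chosen \<open>m\<close> can be exchanged first without changing the other fundamental circuits.\<close>

lemma multi_exchange:
  assumes "ind J" "finite K"
    and "\<And>k. k \<in> K \<Longrightarrow> a k \<in> E \<and> a k \<notin> J \<and> b k \<in> J \<and>
           \<not> ind (insert (a k) J) \<and> b k \<in> fcirc E ind (a k) J"
    and "inj_on a K" "inj_on b K"
    and "\<And>K'. K' \<subseteq> K \<Longrightarrow> K' \<noteq> {} \<Longrightarrow> \<exists>m\<in>K'. \<forall>k\<in>K' - {m}. b m \<notin> fcirc E ind (a k) J"
  shows "ind (J - b ` K \<union> a ` K) \<and> span E ind (J - b ` K \<union> a ` K) = span E ind J"
  using assms(2,1,3-)
proof (induction K arbitrary: J rule: finite_psubset_induct)
  case (psubset K)
  show ?case
  proof (cases "K = {}")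
    case False
    then obtain m where m: "m \<in> K" "\<forall>k\<in>K - {m}. b m \<notin> fcirc E ind (a k) J"
      using psubset.prems(5)[of K] by blast
    note pair = psubset.prems(2)
    have am: "a m \<in> E" "a m \<notin> J" "\<not> ind (insert (a m) J)" "b m \<in> fcirc E ind (a m) J"
      "b m \<noteq> a m" using pair[OF m(1)] by auto
    define J1 where "J1 = insert (a m) (J - {b m})"
    have J1: "ind J1" "span E ind J1 = span E ind J"
      unfolding J1_def using exchange_indep[OF psubset.prems(1) am] exchange_span[OF psubset.prems(1) am]
      by blast+
    have same: "a k \<in> E \<and> a k \<notin> J1 \<and> b k \<in> J1 \<and> \<not> ind (insert (a k) J1) \<and>
        fcirc E ind (a k) J1 = fcirc E ind (a k) J" if k: "k \<in> K - {m}" for k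
    proof -
      have "a k \<noteq> a m" "b k \<noteq> b m"
        using k m(1) psubset.prems(3,4) unfolding inj_on_def by blast+
      then have out: "a k \<notin> J1" and "b k \<in> J1" using pair[of k] k unfolding J1_def by auto
      moreover have "fcirc E ind (a k) J \<subseteq> insert (a k) J1"
        using fundamental_circuit(2)[of J "a k"] pair[of k] psubset.prems(1) k m(2) unfolding J1_def
        by blast
      ultimately show ?thesis
        using fcirc_transfer[OF psubset.prems(1) J1(1)] pair[of k] k by blast
    qed
    have "K - {m} \<subset> K" using m(1) by blast
    moreover have "ind (J1 - b ` (K - {m}) \<union> a ` (K - {m})) \<and>
        span E ind (J1 - b ` (K - {m}) \<union> a ` (K - {m})) = span E ind J1"
    proof (rule psubset.IH[OF \<open>K - {m} \<subset> K\<close> J1(1)])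
      show "\<And>k. k \<in> K - {m} \<Longrightarrow> a k \<in> E \<and> a k \<notin> J1 \<and> b k \<in> J1 \<and>
          \<not> ind (insert (a k) J1) \<and> b k \<in> fcirc E ind (a k) J1"
        using same pair by auto
      show "inj_on a (K - {m})" "inj_on b (K - {m})"
        using psubset.prems(3,4) inj_on_diff by blast+
      show "\<exists>m'\<in>K'. \<forall>k\<in>K' - {m'}. b m' \<notin> fcirc E ind (a k) J1"
        if "K' \<subseteq> K - {m}" "K' \<noteq> {}" for K'
        using psubset.prems(5)[of K'] that same by (metis (no_types, lifting) Diff_iff subset_iff)
    qed
    moreover have "J1 - b ` (K - {m}) \<union> a ` (K - {m}) = J - b ` K \<union> a ` K"
      using m(1) am(2) pair unfolding J1_def by fastforce
    ultimately show ?thesis using J1(2) by simp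
  qed (use psubset.prems(1) in simp)
qed

lemma span_inter_separator:
  assumes "separator E ind Y" "ind W"
  shows "span E ind W \<inter> Y = span E ind (W \<inter> Y) \<inter> Y"
proof -
  have "ind (W \<inter> Y)" using assms(2) indep_subset by blast
  moreover have "Y \<subseteq> E" using assms(1) unfolding separator_def by blast
  ultimately show ?thesis
    using span_indep_iff[OF assms(2)] span_indep_iff separator_insert_indep_iff[OF assms] by blast
qed

text \<open>Elements spanned by a coindependent set \<open>T\<close> but outside it avoid every cobase containing \<open>T\<close>.\<close>

lemma indep_if_cospanned:
  assumes T: "dual E ind T" and X: "X \<subseteq> span E (dual E ind) T - T"
  shows "ind X"
proof -
  interpret D: indep_matroid E "dual E ind" by (rule indep_matroid_dual[OF indep_matroid_axioms])
  obtain B where B: "base E (dual E ind) B" "T \<subseteq> B" using D.base_extend[OF T] by blast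
  have "X \<inter> B = {}"
  proof (rule ccontr)
    assume "X \<inter> B \<noteq> {}"
    then obtain z where z: "z \<in> X" "z \<in> B" by blast
    then have "\<not> dual E ind (insert z T)" using X D.span_indep_iff[OF T] by blast
    moreover have "insert z T \<subseteq> B" using z B(2) by blast
    ultimately show False using D.indep_subset D.baseD(1)[OF B(1)] by blast
  qed
  moreover have "X \<subseteq> E" using X D.span_subset_ground D.indep_subset_ground[OF T] by blast
  ultimately show ?thesis using D.dualI[OF _ B(1)] dual_dual by blast
qed

end

section \<open>Augmenting paths\<close>

lemma feasible_spanring_coindep:
  assumes "indep_matroid E indM" "indep_matroid E indN" and F: "feasible E indM indN I"
  shows "dual E indN (spanring E indM I)"
proof -
  interpret M: indep_matroid E indM by fact
  interpret N: indep_matroid E indN by fact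
  define E' where "E' = E - I"
  define W where "W = spanring E indM I"
  define M' where "M' = contract E indM I"
  define N' where "N' = contract E indN I"
  have "indM I" and cond: "cond E' M' N'"
    using F unfolding feasible_def E'_def M'_def N'_def by blast+
  have "E' \<subseteq> E" unfolding E'_def by blast
  from indep_matroid_restr[OF indep_matroid_dual[OF N.indep_matroid_axioms] this]
  have R': "indep_matroid E' (restr E' (dual E indN))" .
  have N''_eq: "dual E' N' = restr E' (dual E indN)"
    unfolding N'_def contract_def using indep_matroid.dual_dual_eq[OF R'[unfolded E'_def]]
    unfolding E'_def .
  have N'': "indep_matroid E' (dual E' N')" unfolding N''_eq by (rule R')
  have WE': "W \<subseteq> E'" using M.span_subset_ground unfolding W_def E'_def spanring_def by blast
  have no_indep: "K = {}" if "M' K" "K \<subseteq> W" for K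
    using M.contract_indep_in_span[OF \<open>indM I\<close>, of K] that unfolding M'_def W_def spanring_def
    by blast
  interpret R: indep_matroid W "restr W (dual E' N')" by (rule indep_matroid_restr[OF N'' WE'])
  have ctW: "contract_to E' N' W = dual W (restr W (dual E' N'))"
  proof -
    have "E' - (E' - W) = W" using WE' by blast
    then show ?thesis unfolding contract_to_def contract_def by simp
  qed
  obtain D0 where D0: "base W (restr W (dual E' N')) D0" using R.exists_base by blast
  have "wave E' M' N' W"
    unfolding wave_def
  proof (intro conjI exI)
    have "M' {}"
      using indep_matroid.indep_empty[OF indep_matroid_dual[OF
          indep_matroid_restr[OF indep_matroid_dual[OF M.indep_matroid_axioms] \<open>E' \<subseteq> E\<close>]]]
      unfolding M'_def contract_def E'_def .
    then show "base W (restr W M') {}" unfolding base_def restr_def using no_indep by blast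
    show "contract_to E' N' W {}" unfolding ctW using R.dualI[OF _ D0] by blast
  qed (rule WE')
  then obtain B where B: "base W (contract_to E' N' W) B" "M' B" using cond unfolding cond_def by blast
  have "B \<subseteq> W" using B(1) unfolding base_def by blast
  then have "B = {}" using no_indep B(2) by blast
  moreover have "dual W (restr W (dual E' N')) (W - D0)" using R.dualI[OF _ D0] by blast
  ultimately have "W - D0 = {}" using B(1) unfolding base_def ctW by blast
  then have "restr W (dual E' N') W" using R.indep_subset R.baseD(1)[OF D0] by blast
  then show ?thesis using N''_eq unfolding restr_def W_def by simp
qed

lemma arc_iff: "arc E indM indN J x y \<longleftrightarrow> x \<in> E \<and> y \<in> E \<and>
     ((x \<notin> J \<and> \<not> indM (insert x J) \<and> y \<in> fcirc E indM x J - {x}) \<or>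
      (x \<in> J \<inter> E0 E indN \<and> y \<notin> J \<and> \<not> indN (insert y J) \<and> x \<in> fcirc E indN y J) \<or>
      (x \<in> J \<inter> E1 E indN \<and>
          dual E indN (spanring E indM J \<inter> E1 E indN) \<and>
          \<not> dual E indN (insert x (spanring E indM J \<inter> E1 E indN)) \<and>
          y \<in> fcirc E (dual E indN) x (spanring E indM J \<inter> E1 E indN) - {x}))"
  unfolding arc_def Let_def by simp

lemma ex_max_related:
  fixes K :: "'b::linorder set"
  assumes "finite K" "K \<noteq> {}" "\<And>k m. k \<in> K \<Longrightarrow> m \<in> K \<Longrightarrow> k < m \<Longrightarrow> P k m"
  shows "\<exists>m\<in>K. \<forall>k\<in>K - {m}. P k m"
proof -
  have "k < Max K" if "k \<in> K - {Max K}" for k using that Max_ge[OF assms(1)] by fastforce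
  then show ?thesis using Max_in[OF assms(1,2)] assms(3) by blast
qed

lemma ex_min_related:
  fixes K :: "'b::linorder set"
  assumes "finite K" "K \<noteq> {}" "\<And>k m. k \<in> K \<Longrightarrow> m \<in> K \<Longrightarrow> m < k \<Longrightarrow> P k m"
  shows "\<exists>m\<in>K. \<forall>k\<in>K - {m}. P k m"
proof -
  have "Min K < k" if "k \<in> K - {Min K}" for k using that Min_le[OF assms(1)] by fastforce
  then show ?thesis using Min_in[OF assms(1,2)] assms(3) by blast
qed

locale augmenting_path =
  M: indep_matroid E indM + N: indep_matroid E indN
  for E :: "'a set" and indM indN :: "'a set \<Rightarrow> bool" +
  fixes I :: "'a set" and xs :: "'a list"
  assumes dually_safe: "dually_safe E indM indN I"
    and feasible: "feasible E indM indN I"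
    and path: "aug_path E indM indN I xs"
begin

sublocale Ns: indep_matroid E "dual E indN"
  by (rule indep_matroid_dual[OF N.indep_matroid_axioms])

definition n :: nat where "n = length xs div 2"

abbreviation node :: "nat \<Rightarrow> 'a" where "node k \<equiv> xs ! k"

definition S :: "'a set" where "S = spanring E indM I \<inter> E1 E indN"

lemma length_xs: "length xs = 2 * n + 1"
proof -
  obtain m where "length xs = 2 * m + 1" using path unfolding aug_path_def by blast
  then show ?thesis unfolding n_def by simp
qed

lemma xs_nonempty: "xs \<noteq> []"
  using length_xs by (cases xs) auto

lemma first_node: "hd xs = node 0" "node 0 \<in> E0 E indN" "node 0 \<notin> span E indN I"
proof -
  show "hd xs = node 0" using xs_nonempty by (simp add: hd_conv_nth)
  then show "node 0 \<in> E0 E indN" "node 0 \<notin> span E indN I" using path unfolding aug_path_def by auto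
qed

lemma last_node: "last xs = node (2 * n)" "node (2 * n) \<in> E0 E indN" "node (2 * n) \<notin> span E indM I"
proof -
  show "last xs = node (2 * n)" using xs_nonempty by (simp add: last_conv_nth length_xs)
  then show "node (2 * n) \<in> E0 E indN" "node (2 * n) \<notin> span E indM I"
    using path unfolding aug_path_def by auto
qed

lemma arc_node: "k < 2 * n \<Longrightarrow> arc E indM indN I (node k) (node (Suc k))"
  using path length_xs unfolding aug_path_def by auto

lemma no_shortcut: "k + 1 < l \<Longrightarrow> l \<le> 2 * n \<Longrightarrow> \<not> arc E indM indN I (node k) (node l)"
  using path length_xs unfolding aug_path_def by auto

lemma node_in_ground: "k \<le> 2 * n \<Longrightarrow> node k \<in> E"
  using arc_node[of k] last_node(2) N.E0_subset unfolding arc_def by (cases "k < 2 * n") auto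

lemma node_eq_iff: "k \<le> 2 * n \<Longrightarrow> l \<le> 2 * n \<Longrightarrow> node k = node l \<longleftrightarrow> k = l"
  using path length_xs nth_eq_iff_index_eq[of xs k l] unfolding aug_path_def by simp

lemma S_disjoint: "S \<inter> I = {}"
  unfolding S_def spanring_def by blast

lemma S_coindep: "dual E indN S"
  using feasible_spanring_coindep[OF M.indep_matroid_axioms N.indep_matroid_axioms feasible]
    Ns.indep_subset unfolding S_def by blast

lemma node_in_I_iff: "k \<le> 2 * n \<Longrightarrow> node k \<in> I \<longleftrightarrow> odd k"
proof (induction k)
  case 0
  then show ?case using first_node(3) N.span_superset by auto
next
  case (Suc k)
  then have k: "k < 2 * n" by simp
  have IH: "node k \<in> I \<longleftrightarrow> odd k" using Suc.IH k by simp
  note a = arc_node[OF k, unfolded arc_iff]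
  show ?case
  proof (cases "even k")
    case True
    then have out: "node k \<notin> I" using IH by simp
    then have "\<not> indM (insert (node k) I)" "node (Suc k) \<in> fcirc E indM (node k) I - {node k}"
      using a by blast+
    then have "node (Suc k) \<in> I"
      using M.fundamental_circuit(2)[OF _ node_in_ground out] k feasible unfolding feasible_def by fastforce
    then show ?thesis using True by simp
  next
    case False
    then have "node k \<in> I" using IH by simp
    then have "node (Suc k) \<notin> I \<or> node (Suc k) \<in> fcirc E (dual E indN) (node k) S - {node k} \<and>
        \<not> dual E indN (insert (node k) S)"
      using a unfolding S_def by blast
    moreover have "node k \<notin> S" using \<open>node k \<in> I\<close> S_disjoint by blast
    ultimately have "node (Suc k) \<notin> I"
      using Ns.fundamental_circuit(2)[OF S_coindep node_in_ground[of k]] k S_disjoint by fastforce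
    then show ?thesis using False by simp
  qed
qed

lemma arc_out_in:
  assumes "k < n"
  shows "\<not> indM (insert (node (2 * k)) I) \<and> node (2 * k + 1) \<in> fcirc E indM (node (2 * k)) I"
  using arc_node[of "2 * k"] node_in_I_iff[of "2 * k"] assms unfolding arc_iff by auto

lemma arc_in_out_E0:
  assumes "k < n" "node (2 * k + 1) \<in> E0 E indN"
  shows "\<not> indN (insert (node (2 * k + 2)) I) \<and> node (2 * k + 1) \<in> fcirc E indN (node (2 * k + 2)) I \<and>
    node (2 * k + 2) \<in> E0 E indN"
proof -
  have inI: "node (2 * k + 1) \<in> I" "node (2 * k + 2) \<notin> I"
    using node_in_I_iff[of "2 * k + 1"] node_in_I_iff[of "2 * k + 2"] assms(1) by auto
  then have dep: "\<not> indN (insert (node (2 * k + 2)) I)"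
    and mem: "node (2 * k + 1) \<in> fcirc E indN (node (2 * k + 2)) I"
    using arc_node[of "2 * k + 1"] assms unfolding arc_iff E1_def by auto
  have "node (2 * k + 2) \<in> E" using node_in_ground assms(1) by simp
  note C = N.fundamental_circuit[OF _ this inI(2) dep]
  have "fcirc E indN (node (2 * k + 2)) I \<subseteq> E0 E indN"
    using N.circuit_subset_E0[OF C(1) mem assms(2)] feasible unfolding feasible_def by blast
  then show ?thesis using dep mem C(3) feasible unfolding feasible_def by blast
qed

lemma arc_in_out_E1:
  assumes "k < n" "node (2 * k + 1) \<notin> E0 E indN"
  shows "\<not> dual E indN (insert (node (2 * k + 1)) S) \<and>
    node (2 * k + 2) \<in> fcirc E (dual E indN) (node (2 * k + 1)) S \<and> node (2 * k + 2) \<in> S"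
proof -
  have inI: "node (2 * k + 1) \<in> I" using node_in_I_iff[of "2 * k + 1"] assms(1) by simp
  have E: "node (2 * k + 1) \<in> E" using node_in_ground assms(1) by simp
  have dep: "\<not> dual E indN (insert (node (2 * k + 1)) S)"
    and mem: "node (2 * k + 2) \<in> fcirc E (dual E indN) (node (2 * k + 1)) S - {node (2 * k + 1)}"
    using arc_node[of "2 * k + 1"] assms inI E unfolding arc_iff E1_def S_def by auto
  have "node (2 * k + 1) \<notin> S" using inI S_disjoint by blast
  then have "node (2 * k + 2) \<in> S" using mem Ns.fundamental_circuit(2)[OF S_coindep E _ dep] by blast
  then show ?thesis using dep mem by blast
qed

lemma arcI_M:
  assumes "k \<le> 2 * n" "l \<le> 2 * n" "k \<noteq> l" "node k \<notin> I"
    and "\<not> indM (insert (node k) I)" "node l \<in> fcirc E indM (node k) I"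
  shows "arc E indM indN I (node k) (node l)"
  using assms node_in_ground node_eq_iff unfolding arc_def by simp

lemma arcI_N:
  assumes "k \<le> 2 * n" "l \<le> 2 * n" "node k \<in> I" "node k \<in> E0 E indN" "node l \<notin> I"
    and "\<not> indN (insert (node l) I)" "node k \<in> fcirc E indN (node l) I"
  shows "arc E indM indN I (node k) (node l)"
  using assms node_in_ground unfolding arc_def by simp

lemma arcI_dual:
  assumes "k \<le> 2 * n" "l \<le> 2 * n" "k \<noteq> l" "node k \<in> I" "node k \<notin> E0 E indN"
    and "\<not> dual E indN (insert (node k) S)" "node l \<in> fcirc E (dual E indN) (node k) S"
  shows "arc E indM indN I (node k) (node l)"
  using assms node_in_ground node_eq_iff S_coindep unfolding arc_def E1_def S_def Let_def by simp

lemma M_exchange: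
  defines "J \<equiv> insert (node (2 * n)) I"
  shows "indM (J - (\<lambda>k. node (2 * k + 1)) ` {..<n} \<union> (\<lambda>k. node (2 * k)) ` {..<n}) \<and>
    span E indM (J - (\<lambda>k. node (2 * k + 1)) ` {..<n} \<union> (\<lambda>k. node (2 * k)) ` {..<n}) = span E indM J"
proof -
  have indI: "indM I" using feasible unfolding feasible_def by blast
  have indJ: "indM J"
    using last_node(3) M.span_indep_iff[OF indI] node_in_ground[of "2 * n"] unfolding J_def by blast
  have circ: "node (2 * k) \<notin> J \<and> \<not> indM (insert (node (2 * k)) J) \<and>
      fcirc E indM (node (2 * k)) J = fcirc E indM (node (2 * k)) I" if k: "k < n" for k
  proof -
    have out: "node (2 * k) \<notin> I" using node_in_I_iff[of "2 * k"] k by simp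
    moreover have "node (2 * k) \<noteq> node (2 * n)" using node_eq_iff[of "2 * k" "2 * n"] k by simp
    ultimately have outJ: "node (2 * k) \<notin> J" unfolding J_def by blast
    have E: "node (2 * k) \<in> E" using node_in_ground k by simp
    have "fcirc E indM (node (2 * k)) I \<subseteq> insert (node (2 * k)) J"
      using M.fundamental_circuit(2)[OF indI E out] arc_out_in[OF k] unfolding J_def by blast
    then show ?thesis using M.fcirc_transfer[OF indI indJ E out outJ] arc_out_in[OF k] outJ by blast
  qed
  show ?thesis
  proof (rule M.multi_exchange[OF indJ finite_lessThan])
    fix k assume "k \<in> {..<n}"
    then have k: "k < n" by simp
    have "node (2 * k + 1) \<in> I" using node_in_I_iff[of "2 * k + 1"] k by simp
    then show "node (2 * k) \<in> E \<and> node (2 * k) \<notin> J \<and> node (2 * k + 1) \<in> J \<and>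
        \<not> indM (insert (node (2 * k)) J) \<and> node (2 * k + 1) \<in> fcirc E indM (node (2 * k)) J"
      using circ[OF k] arc_out_in[OF k] node_in_ground[of "2 * k"] k unfolding J_def by simp
  next
    show "inj_on (\<lambda>k. node (2 * k)) {..<n}" "inj_on (\<lambda>k. node (2 * k + 1)) {..<n}"
      using node_eq_iff unfolding inj_on_def by auto
  next
    fix K' assume K': "K' \<subseteq> {..<n}" "K' \<noteq> {}"
    show "\<exists>m\<in>K'. \<forall>k\<in>K' - {m}. node (2 * m + 1) \<notin> fcirc E indM (node (2 * k)) J"
    proof (rule ex_max_related[OF finite_subset[OF K'(1) finite_lessThan] K'(2)])
      fix k m assume "k \<in> K'" "m \<in> K'" "k < m"
      then have km: "k < m" "m < n" using K'(1) by auto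
      have "\<not> arc E indM indN I (node (2 * k)) (node (2 * m + 1))" using no_shortcut km by simp
      then show "node (2 * m + 1) \<notin> fcirc E indM (node (2 * k)) J"
        using arcI_M[of "2 * k" "2 * m + 1"] circ[of k] arc_out_in[of k] node_in_I_iff[of "2 * k"] km
        by auto
    qed
  qed
qed

definition K0 :: "nat set" where "K0 = {k. k < n \<and> node (2 * k + 1) \<in> E0 E indN}"
definition K1 :: "nat set" where "K1 = {k. k < n \<and> node (2 * k + 1) \<notin> E0 E indN}"

definition odd_nodes :: "nat set \<Rightarrow> 'a set" where "odd_nodes K = (\<lambda>k. node (2 * k + 1)) ` K"
definition even_nodes :: "nat set \<Rightarrow> 'a set" where "even_nodes K = (\<lambda>k. node (2 * k)) ` K"
definition next_even_nodes :: "nat set \<Rightarrow> 'a set" where "next_even_nodes K = (\<lambda>k. node (2 * k + 2)) ` K"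

lemma K0_K1: "finite K0" "finite K1" "K0 \<union> K1 = {..<n}" "K0 \<subseteq> {..<n}" "K1 \<subseteq> {..<n}"
  unfolding K0_def K1_def by auto

lemma N_exchange:
  defines "J \<equiv> insert (node 0) I"
  shows "indN (J - odd_nodes K0 \<union> next_even_nodes K0) \<and>
    span E indN (J - odd_nodes K0 \<union> next_even_nodes K0) = span E indN J"
proof -
  have indI: "indN I" using feasible unfolding feasible_def by blast
  have indJ: "indN J"
    using first_node(3) N.span_indep_iff[OF indI] node_in_ground[of 0] unfolding J_def by blast
  have circ: "node (2 * k + 2) \<notin> J \<and> \<not> indN (insert (node (2 * k + 2)) J) \<and>
      fcirc E indN (node (2 * k + 2)) J = fcirc E indN (node (2 * k + 2)) I" if k: "k \<in> K0" for k
  proof -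
    have k': "k < n" "node (2 * k + 1) \<in> E0 E indN" using k unfolding K0_def by auto
    have out: "node (2 * k + 2) \<notin> I" using node_in_I_iff[of "2 * k + 2"] k' by simp
    moreover have "node (2 * k + 2) \<noteq> node 0" using node_eq_iff[of "2 * k + 2" 0] k' by simp
    ultimately have outJ: "node (2 * k + 2) \<notin> J" unfolding J_def by blast
    have E: "node (2 * k + 2) \<in> E" using node_in_ground k' by simp
    have "fcirc E indN (node (2 * k + 2)) I \<subseteq> insert (node (2 * k + 2)) J"
      using N.fundamental_circuit(2)[OF indI E out] arc_in_out_E0[OF k'] unfolding J_def by blast
    then show ?thesis
      using N.fcirc_transfer[OF indI indJ E out outJ] arc_in_out_E0[OF k'] outJ by blast
  qed
  show ?thesis
    unfolding odd_nodes_def next_even_nodes_def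
  proof (rule N.multi_exchange[OF indJ K0_K1(1)])
    fix k assume k: "k \<in> K0"
    then have k': "k < n" "node (2 * k + 1) \<in> E0 E indN" unfolding K0_def by auto
    have "node (2 * k + 1) \<in> I" using node_in_I_iff[of "2 * k + 1"] k' by simp
    then show "node (2 * k + 2) \<in> E \<and> node (2 * k + 2) \<notin> J \<and> node (2 * k + 1) \<in> J \<and>
        \<not> indN (insert (node (2 * k + 2)) J) \<and> node (2 * k + 1) \<in> fcirc E indN (node (2 * k + 2)) J"
      using circ[OF k] arc_in_out_E0[OF k'] node_in_ground[of "2 * k + 2"] k' unfolding J_def by simp
  next
    show "inj_on (\<lambda>k. node (2 * k + 2)) K0" "inj_on (\<lambda>k. node (2 * k + 1)) K0"
      using node_eq_iff unfolding inj_on_def K0_def by auto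
  next
    fix K' assume K': "K' \<subseteq> K0" "K' \<noteq> {}"
    show "\<exists>m\<in>K'. \<forall>k\<in>K' - {m}. node (2 * m + 1) \<notin> fcirc E indN (node (2 * k + 2)) J"
    proof (rule ex_min_related[OF finite_subset[OF K'(1) K0_K1(1)] K'(2)])
      fix k m assume "k \<in> K'" "m \<in> K'" "m < k"
      then have km: "k \<in> K0" "m \<in> K0" "m < k" using K'(1) by auto
      then have "k < n" "m < n" "node (2 * m + 1) \<in> E0 E indN" "node (2 * k + 1) \<in> E0 E indN"
        unfolding K0_def by auto
      moreover have "\<not> arc E indM indN I (node (2 * m + 1)) (node (2 * k + 2))"
        using no_shortcut km(3) \<open>k < n\<close> by simp
      ultimately show "node (2 * m + 1) \<notin> fcirc E indN (node (2 * k + 2)) J"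
        using arcI_N[of "2 * m + 1" "2 * k + 2"] circ[OF km(1)] arc_in_out_E0[of k]
          node_in_I_iff[of "2 * m + 1"] node_in_I_iff[of "2 * k + 2"] by auto
    qed
  qed
qed

lemma coindep_exchange:
  "dual E indN (S - next_even_nodes K1 \<union> odd_nodes K1) \<and>
    span E (dual E indN) (S - next_even_nodes K1 \<union> odd_nodes K1) = span E (dual E indN) S"
  unfolding odd_nodes_def next_even_nodes_def
proof (rule Ns.multi_exchange[OF S_coindep K0_K1(2)])
  fix k assume k: "k \<in> K1"
  then have k': "k < n" "node (2 * k + 1) \<notin> E0 E indN" unfolding K1_def by auto
  have "node (2 * k + 1) \<in> I" using node_in_I_iff[of "2 * k + 1"] k' by simp
  then show "node (2 * k + 1) \<in> E \<and> node (2 * k + 1) \<notin> S \<and> node (2 * k + 2) \<in> S \<and>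
      \<not> dual E indN (insert (node (2 * k + 1)) S) \<and>
      node (2 * k + 2) \<in> fcirc E (dual E indN) (node (2 * k + 1)) S"
    using arc_in_out_E1[OF k'] node_in_ground[of "2 * k + 1"] S_disjoint k' by auto
next
  show "inj_on (\<lambda>k. node (2 * k + 1)) K1" "inj_on (\<lambda>k. node (2 * k + 2)) K1"
    using node_eq_iff unfolding inj_on_def K1_def by auto
next
  fix K' assume K': "K' \<subseteq> K1" "K' \<noteq> {}"
  show "\<exists>m\<in>K'. \<forall>k\<in>K' - {m}. node (2 * m + 2) \<notin> fcirc E (dual E indN) (node (2 * k + 1)) S"
  proof (rule ex_max_related[OF finite_subset[OF K'(1) K0_K1(2)] K'(2)])
    fix k m assume "k \<in> K'" "m \<in> K'" "k < m"
    then have km: "k \<in> K1" "m \<in> K1" "k < m" using K'(1) by auto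
    then have "k < n" "m < n" "node (2 * k + 1) \<notin> E0 E indN" unfolding K1_def by auto
    moreover have "\<not> arc E indM indN I (node (2 * k + 1)) (node (2 * m + 2))"
      using no_shortcut km(3) \<open>m < n\<close> by simp
    moreover have "2 * k + 1 \<noteq> 2 * m + 2" by presburger
    ultimately show "node (2 * m + 2) \<notin> fcirc E (dual E indN) (node (2 * k + 1)) S"
      using arcI_dual[of "2 * k + 1" "2 * m + 2"] arc_in_out_E1 node_in_I_iff[of "2 * k + 1"] by auto
  qed
qed

lemma set_xs: "set xs = even_nodes {..n} \<union> odd_nodes {..<n}"
  unfolding even_nodes_def odd_nodes_def
proof (intro equalityI subsetI)
  fix x assume "x \<in> set xs"
  then obtain i where i: "i \<le> 2 * n" "x = node i"
    using length_xs by (auto simp: in_set_conv_nth less_Suc_eq_le)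
  show "x \<in> (\<lambda>k. node (2 * k)) ` {..n} \<union> (\<lambda>k. node (2 * k + 1)) ` {..<n}"
  proof (cases "even i")
    case True
    then obtain k where "i = 2 * k" by blast
    then show ?thesis using i by auto
  next
    case False
    then obtain k where "i = 2 * k + 1" using oddE by blast
    then show ?thesis using i by auto
  qed
next
  fix x assume "x \<in> (\<lambda>k. node (2 * k)) ` {..n} \<union> (\<lambda>k. node (2 * k + 1)) ` {..<n}"
  then show "x \<in> set xs" by (elim UnE imageE) (auto intro!: nth_mem simp: length_xs)
qed

lemma even_nodes_split: "even_nodes {..n} = insert (node 0) (next_even_nodes K0 \<union> next_even_nodes K1)"
proof -
  have "{..n} = insert 0 (Suc ` (K0 \<union> K1))"
    unfolding K0_K1(3) using not0_implies_Suc by fastforce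
  then show ?thesis unfolding even_nodes_def next_even_nodes_def by (simp add: image_Un image_image)
qed

lemma odd_nodes_split: "odd_nodes {..<n} = odd_nodes K0 \<union> odd_nodes K1"
  unfolding odd_nodes_def K0_K1(3)[symmetric] by (rule image_Un)

lemma odd_node_in_I: "k < n \<Longrightarrow> node (2 * k + 1) \<in> I"
  using node_in_I_iff[of "2 * k + 1"] by simp

lemma even_node_notin_I: "k \<le> n \<Longrightarrow> node (2 * k) \<notin> I"
  using node_in_I_iff[of "2 * k"] by simp

lemma path_regions:
  "node 0 \<in> E0 E indN - I"
  "odd_nodes K0 \<subseteq> I \<inter> E0 E indN" "odd_nodes K1 \<subseteq> I \<inter> E1 E indN"
  "next_even_nodes K0 \<subseteq> E0 E indN - I" "next_even_nodes K1 \<subseteq> S"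
  "S \<subseteq> E1 E indN - I" "E0 E indN \<inter> E1 E indN = {}"
proof -
  show "node 0 \<in> E0 E indN - I" using first_node(2) even_node_notin_I[of 0] by simp
  show "odd_nodes K0 \<subseteq> I \<inter> E0 E indN"
    using odd_node_in_I unfolding K0_def odd_nodes_def by blast
  have "node (2 * k + 1) \<in> E" if "k < n" for k using node_in_ground that by simp
  then show "odd_nodes K1 \<subseteq> I \<inter> E1 E indN"
    using odd_node_in_I unfolding K1_def E1_def odd_nodes_def by blast
  have "node (2 * k + 2) \<notin> I" if "k < n" for k using even_node_notin_I[of "Suc k"] that by simp
  then show "next_even_nodes K0 \<subseteq> E0 E indN - I"
    using arc_in_out_E0 unfolding K0_def next_even_nodes_def by blast
  show "next_even_nodes K1 \<subseteq> S" using arc_in_out_E1 unfolding K1_def next_even_nodes_def by blast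
  show "S \<subseteq> E1 E indN - I" using S_disjoint unfolding S_def by blast
  show "E0 E indN \<inter> E1 E indN = {}" unfolding E1_def by blast
qed

lemma symdiff_eq: "symdiff I (set xs) = I - odd_nodes {..<n} \<union> even_nodes {..n}"
proof -
  have "even_nodes {..n} \<inter> I = {}" using even_node_notin_I unfolding even_nodes_def by blast
  moreover have "odd_nodes {..<n} \<subseteq> I" using odd_node_in_I unfolding odd_nodes_def by blast
  ultimately show ?thesis unfolding symdiff_def set_xs by blast
qed

lemma symdiff_M_eq:
  "symdiff I (set xs) = insert (node (2 * n)) I - odd_nodes {..<n} \<union> even_nodes {..<n}"
proof -
  have "node (2 * n) \<notin> odd_nodes {..<n}" using node_eq_iff unfolding odd_nodes_def by fastforce
  moreover have "even_nodes {..n} = insert (node (2 * n)) (even_nodes {..<n})"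
    unfolding even_nodes_def lessThan_Suc_atMost[symmetric] lessThan_Suc by simp
  ultimately show ?thesis unfolding symdiff_eq by auto
qed

lemma symdiff_E0_eq:
  "symdiff I (set xs) \<inter> E0 E indN = (insert (node 0) I - odd_nodes K0 \<union> next_even_nodes K0) \<inter> E0 E indN"
  unfolding symdiff_eq even_nodes_split odd_nodes_split using path_regions by blast

lemma symdiff_E1_eq: "symdiff I (set xs) - E0 E indN = I - E0 E indN - odd_nodes K1 \<union> next_even_nodes K1"
  unfolding symdiff_eq even_nodes_split odd_nodes_split using path_regions by blast

lemma symdiff_S_eq: "symdiff S (set xs \<inter> E1 E indN) = S - next_even_nodes K1 \<union> odd_nodes K1"
proof -
  have "set xs \<inter> E1 E indN = odd_nodes K1 \<union> next_even_nodes K1"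
    unfolding set_xs even_nodes_split odd_nodes_split using path_regions by blast
  then show ?thesis unfolding symdiff_def using path_regions by blast
qed

lemma I_E1_cospanned: "I \<inter> E1 E indN \<subseteq> span E (dual E indN) S"
proof -
  have W: "dual E indN (spanring E indM I)"
    using feasible_spanring_coindep[OF M.indep_matroid_axioms N.indep_matroid_axioms feasible] .
  have sep: "separator E (dual E indN) (E1 E indN)"
    unfolding E1_def using N.separator_dual[OF N.separator_compl[OF N.separator_E0]] .
  have "I \<inter> E1 E indN \<subseteq> span E (dual E indN) (spanring E indM I) \<inter> E1 E indN"
    using dually_safe unfolding dually_safe_def by blast
  also have "\<dots> = span E (dual E indN) S \<inter> E1 E indN"
    using Ns.span_inter_separator[OF sep W] unfolding S_def .
  finally show ?thesis by blast
qed

lemma symdiff_indep_M: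
  "indM (symdiff I (set xs))" "span E indM (symdiff I (set xs)) = span E indM (insert (last xs) I)"
  using M_exchange unfolding symdiff_M_eq last_node(1) odd_nodes_def even_nodes_def by simp_all

lemma symdiff_S_coindep:
  "dual E indN (symdiff S (set xs \<inter> E1 E indN))"
  "span E (dual E indN) (symdiff S (set xs \<inter> E1 E indN)) = span E (dual E indN) S"
  using coindep_exchange unfolding symdiff_S_eq by simp_all

lemma symdiff_outside_E0_cospanned:
  defines "S' \<equiv> symdiff S (set xs \<inter> E1 E indN)"
  shows "symdiff I (set xs) - E0 E indN \<subseteq> span E (dual E indN) S' - S'"
proof
  fix x assume x: "x \<in> symdiff I (set xs) - E0 E indN"
  have "I \<subseteq> E" using feasible M.indep_subset_ground unfolding feasible_def by blast
  then have "I - E0 E indN \<subseteq> span E (dual E indN) S" using I_E1_cospanned unfolding E1_def by blast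
  moreover have "S \<subseteq> span E (dual E indN) S" using Ns.span_superset .
  moreover note regions = path_regions(3,5,6)
  moreover have "x \<in> I - E0 E indN - odd_nodes K1 \<union> next_even_nodes K1"
    using x unfolding symdiff_E1_eq .
  ultimately have "x \<in> span E (dual E indN) S" "x \<notin> S - next_even_nodes K1 \<union> odd_nodes K1"
    by blast+
  then show "x \<in> span E (dual E indN) S' - S'"
    using symdiff_S_coindep(2) unfolding S'_def symdiff_S_eq by simp
qed

lemma symdiff_indep_N: "indN (symdiff I (set xs))"
proof -
  let ?J = "insert (node 0) I - odd_nodes K0 \<union> next_even_nodes K0"
  have "indN ?J" using N_exchange by blast
  then have "indN (symdiff I (set xs) \<inter> E0 E indN)"
    unfolding symdiff_E0_eq by (rule N.indep_subset) blast
  moreover have "indN (symdiff I (set xs) - E0 E indN)"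
    using N.indep_if_cospanned[OF symdiff_S_coindep(1) symdiff_outside_E0_cospanned] .
  moreover have "symdiff I (set xs) \<subseteq> E" using M.indep_subset_ground symdiff_indep_M(1) .
  ultimately show ?thesis using N.separatorD[OF N.separator_E0, of "symdiff I (set xs)"] by blast
qed

lemma symdiff_span_N:
  "span E indN (symdiff I (set xs)) \<inter> E0 E indN = span E indN (insert (hd xs) I) \<inter> E0 E indN"
proof -
  let ?J = "insert (node 0) I - odd_nodes K0 \<union> next_even_nodes K0"
  have "span E indN (symdiff I (set xs)) \<inter> E0 E indN
      = span E indN (symdiff I (set xs) \<inter> E0 E indN) \<inter> E0 E indN"
    using N.span_inter_separator[OF N.separator_E0 symdiff_indep_N] .
  also have "\<dots> = span E indN (?J \<inter> E0 E indN) \<inter> E0 E indN" unfolding symdiff_E0_eq ..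
  also have "\<dots> = span E indN ?J \<inter> E0 E indN"
    by (rule N.span_inter_separator[OF N.separator_E0 conjunct1[OF N_exchange], symmetric])
  finally show ?thesis using N_exchange first_node(1) by simp
qed

lemma symdiff_S_disjoint: "symdiff S (set xs \<inter> E1 E indN) \<inter> symdiff I (set xs) = {}"
proof -
  note R = path_regions
  have "(S - next_even_nodes K1) \<inter> insert (node 0) (next_even_nodes K0 \<union> next_even_nodes K1) = {}"
    using R(1,4,6,7) by blast
  moreover have "odd_nodes K1 \<inter> insert (node 0) (next_even_nodes K0 \<union> next_even_nodes K1) = {}"
    using R(1,3,4,5,6) by blast
  ultimately show ?thesis
    unfolding symdiff_S_eq symdiff_eq even_nodes_split odd_nodes_split using R(6) by blast
qed

lemma symdiff_dually_safe: "dually_safe E indM indN (symdiff I (set xs))"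
proof -
  let ?IP = "symdiff I (set xs)" and ?S' = "symdiff S (set xs \<inter> E1 E indN)"
  have "?S' \<subseteq> S \<union> I" unfolding symdiff_S_eq using path_regions(3) by blast
  also have "\<dots> \<subseteq> span E indM I" using M.span_superset unfolding S_def spanring_def by blast
  also have "\<dots> \<subseteq> span E indM ?IP" unfolding symdiff_indep_M(2) by (rule M.span_mono) blast
  finally have "?S' \<subseteq> spanring E indM ?IP" using symdiff_S_disjoint unfolding spanring_def by blast
  then have "span E (dual E indN) ?S' \<subseteq> span E (dual E indN) (spanring E indM ?IP)"
    by (rule Ns.span_mono)
  moreover have "?IP \<inter> E1 E indN \<subseteq> ?IP - E0 E indN" unfolding E1_def by blast
  ultimately show ?thesis
    unfolding dually_safe_def using symdiff_outside_E0_cospanned by blast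
qed

end

theorem mainTheorem14:
  fixes E :: "'a set" and indM indN :: "'a set \<Rightarrow> bool" and I :: "'a set" and xs :: "'a list"
  assumes "countable E"
    and "matroid E indM" and "finitary E indM"
    and "matroid E indN" and "fin_cofin_sum E indN"
    and "dually_safe E indM indN I"
    and "feasible E indM indN I"
    and "aug_path E indM indN I xs"
  shows "let P = set xs; S = spanring E indM I \<inter> E1 E indN; IP = symdiff I P;
             S' = symdiff S (P \<inter> E1 E indN) in
           indM IP \<and> indN IP \<and> dually_safe E indM indN IP \<and>
           span E indM IP = span E indM (insert (last xs) I) \<and>
           span E indN IP \<inter> E0 E indN = span E indN (insert (hd xs) I) \<inter> E0 E indN \<and>
           span E (dual E indN) S = span E (dual E indN) S' \<and>
           dual E indN S'"
proof -
  interpret augmenting_path E indM indN I xs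
    using assms(2,4,6-8) by (intro augmenting_path.intro indep_matroid.intro augmenting_path_axioms.intro)
  show ?thesis
    unfolding Let_def S_def[symmetric]
    using symdiff_indep_M symdiff_indep_N symdiff_dually_safe symdiff_span_N symdiff_S_coindep by simp
qed

end
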